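(* For every graph $G$, there is a graph $G'$ with the same number of vertices as $G$ such that $G$ is a subgraph of $G'$ and such that $\lfloor \mathrm{sp}\rfloor(G)=\mathrm{sp}(G')$.
   Context: All graphs are finite, have at least one vertex, have no loops, and may have multiple (parallel) edges. A path of order $k+1$ has $k$ edges and $k+1$ distinct vertices. A shortest path from $u$ to $v$ is a $u$–$v$ path such that no $u$–$v$ path has fewer vertices. A unique shortest path is a shortest $u$–$v$ path $P$ such that every $u$–$v$ path with the same number of vertices is identical to $P$, where two paths with different edge sequences are different even if their vertex sequences agree (so no edge of a unique shortest path has a parallel edge); a single vertex is a unique shortest path. The parade number $\mathrm{usp}(G)$ is the largest number of vertices of a unique shortest path in $G$; a parade is a unique shortest path attaining it. The spectator number is $\mathrm{sp}(G)=|V(G)|-\mathrm{usp}(G)$. A minor of a graph $H$ is any graph obtained from $H$ by a sequence of the operations: deleting an isolated vertex, deleting an edge, contracting an edge that has no edge parallel to it. The spectator floor $\lfloor \mathrm{sp}\rfloor(G)$ is the minimum of $\mathrm{sp}(H)$ over all graphs $H$ of which $G$ is a minor. *)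

theory Defs
  imports Main
begin

text \<open>Vertices and edges are labelled by natural
numbers; parallel edges are distinct edge labels with the same end set.
\<open>g_ends G e\<close> is the (two-element) set of end vertices of edge \<open>e\<close>.\<close>

record mgraph =
  g_verts :: "nat set"
  g_edges :: "nat set"
  g_ends  :: "nat \<Rightarrow> nat set"

definition wf_graph :: "mgraph \<Rightarrow> bool" where
  "wf_graph G \<longleftrightarrow> finite (g_verts G) \<and> g_verts G \<noteq> {} \<and> finite (g_edges G) \<and>
     (\<forall>e\<in>g_edges G. g_ends G e \<subseteq> g_verts G \<and> card (g_ends G e) = 2)"

definition is_path :: "mgraph \<Rightarrow> nat list \<times> nat list \<Rightarrow> nat \<Rightarrow> nat \<Rightarrow> bool" where
  "is_path G P u v \<longleftrightarrow>
     (let vs = fst P; es = snd P in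
      vs \<noteq> [] \<and> hd vs = u \<and> last vs = v \<and> distinct vs \<and> set vs \<subseteq> g_verts G \<and>
      length es + 1 = length vs \<and>
      (\<forall>i < length es. es ! i \<in> g_edges G \<and> g_ends G (es ! i) = {vs ! i, vs ! Suc i}))"

definition shortest_path :: "mgraph \<Rightarrow> nat list \<times> nat list \<Rightarrow> nat \<Rightarrow> nat \<Rightarrow> bool" where
  "shortest_path G P u v \<longleftrightarrow> is_path G P u v \<and>
     (\<forall>Q. is_path G Q u v \<longrightarrow> length (fst P) \<le> length (fst Q))"

definition unique_shortest_path :: "mgraph \<Rightarrow> nat list \<times> nat list \<Rightarrow> nat \<Rightarrow> nat \<Rightarrow> bool" where
  "unique_shortest_path G P u v \<longleftrightarrow> shortest_path G P u v \<and>
     (\<forall>Q. is_path G Q u v \<and> length (fst Q) = length (fst P) \<longrightarrow> Q = P)"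

definition usp :: "mgraph \<Rightarrow> nat" where
  "usp G = Max {length (fst P) | P u v. unique_shortest_path G P u v}"

definition sp :: "mgraph \<Rightarrow> nat" where
  "sp G = card (g_verts G) - usp G"

definition delete_vertex :: "mgraph \<Rightarrow> nat \<Rightarrow> mgraph" where
  "delete_vertex G v = G\<lparr>g_verts := g_verts G - {v}\<rparr>"

definition delete_edge :: "mgraph \<Rightarrow> nat \<Rightarrow> mgraph" where
  "delete_edge G e = G\<lparr>g_edges := g_edges G - {e}\<rparr>"

definition contract_edge :: "mgraph \<Rightarrow> nat \<Rightarrow> mgraph" where
  "contract_edge G e =
     (let u = Min (g_ends G e); v = Max (g_ends G e) in
      \<lparr> g_verts = g_verts G - {v}, g_edges = g_edges G - {e},
        g_ends = (\<lambda>f. (\<lambda>x. if x = v then u else x) ` g_ends G f) \<rparr>)"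

definition parallel :: "mgraph \<Rightarrow> nat \<Rightarrow> nat \<Rightarrow> bool" where
  "parallel G e f \<longleftrightarrow> e \<noteq> f \<and> f \<in> g_edges G \<and> g_ends G f = g_ends G e"

inductive minor_step :: "mgraph \<Rightarrow> mgraph \<Rightarrow> bool" where
  del_vertex: "\<lbrakk> v \<in> g_verts H; g_verts H - {v} \<noteq> {};
                 \<forall>e\<in>g_edges H. v \<notin> g_ends H e \<rbrakk> \<Longrightarrow> minor_step H (delete_vertex H v)"
| del_edge: "e \<in> g_edges H \<Longrightarrow> minor_step H (delete_edge H e)"
| contract: "\<lbrakk> e \<in> g_edges H; \<forall>f. \<not> parallel H e f \<rbrakk> \<Longrightarrow> minor_step H (contract_edge H e)"

definition graph_iso :: "mgraph \<Rightarrow> mgraph \<Rightarrow> bool" where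
  "graph_iso G H \<longleftrightarrow> (\<exists>f g. bij_betw f (g_verts G) (g_verts H) \<and>
      bij_betw g (g_edges G) (g_edges H) \<and>
      (\<forall>e\<in>g_edges G. g_ends H (g e) = f ` g_ends G e))"

definition is_minor :: "mgraph \<Rightarrow> mgraph \<Rightarrow> bool" where
  "is_minor G H \<longleftrightarrow> (\<exists>H'. minor_step\<^sup>*\<^sup>* H H' \<and> graph_iso G H')"

definition sp_floor :: "mgraph \<Rightarrow> nat" where
  "sp_floor G = Inf {sp H | H. wf_graph H \<and> is_minor G H}"

definition subgraph :: "mgraph \<Rightarrow> mgraph \<Rightarrow> bool" where
  "subgraph G H \<longleftrightarrow> g_verts G \<subseteq> g_verts H \<and> g_edges G \<subseteq> g_edges H \<and>
     (\<forall>e\<in>g_edges G. g_ends H e = g_ends G e)"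

end

theory Submission
  imports Defs
begin

text \<open>Contracting an edge costs a graph at most one parade vertex, provided edges may be added
  afterwards.  Let the parade run from \<open>x\<^sub>0\<close> to \<open>x\<^sub>m\<close> and contract an edge \<open>uv\<close>.  If \<open>uv\<close>
  is a parade edge, the contracted parade is still a unique shortest path.  Otherwise the
  distances to \<open>x\<^sub>0\<close> and \<open>x\<^sub>m\<close> locate a position \<open>s\<close> at which the merged vertex would not
  shorten the parade; deleting \<open>x\<^sub>s\<close> from the parade and joining \<open>x\<^sub>s\<^sub>-\<^sub>1\<close> to \<open>x\<^sub>s\<^sub>+\<^sub>1\<close> by a new
  edge leaves a unique shortest path on \<open>m\<close> vertices.  In both cases uniqueness is certified by
  two potentials that change by at most one along every edge, built from the distances in the
  original graph.  Deleting an edge changes nothing, and deleting a vertex is a contraction of an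
  edge at that vertex in the supergraph, unless the vertex is isolated there as well.

  Hence along a sequence of minor operations from \<open>H\<close> to a copy of \<open>G\<close> one can keep a spanning
  supergraph of the current graph whose spectator number never exceeds \<open>sp H\<close>.  Transported back
  to \<open>G\<close>, it is a spanning supergraph \<open>G'\<close> of \<open>G\<close> with \<open>sp G' \<le> sp H\<close>; choosing \<open>H\<close> optimal and
  noting that \<open>G\<close> is a minor of \<open>G'\<close> gives \<open>sp G' = \<lfloor>sp\<rfloor>(G)\<close>.\<close>

section \<open>Walks and distances\<close>

lemma card_2_obtain:
  assumes "card S = 2"
  obtains a b where "S = {a, b}" "a \<noteq> b"
  using assms by (auto simp: card_Suc_eq numeral_2_eq_2)

lemma card_2_other:
  assumes "card S = 2" "v \<in> S"
  obtains w where "S = {w, v}"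
proof -
  obtain x y where "S = {x, y}" using assms(1) by (rule card_2_obtain)
  then show ?thesis using that[of "if x = v then y else x"] assms(2) by (auto simp: insert_commute)
qed

fun walk_seq :: "mgraph \<Rightarrow> nat list \<Rightarrow> nat list \<Rightarrow> bool" where
  "walk_seq H [a] [] \<longleftrightarrow> a \<in> g_verts H"
| "walk_seq H (a # b # vs) (e # es) \<longleftrightarrow>
     a \<in> g_verts H \<and> e \<in> g_edges H \<and> g_ends H e = {a, b} \<and> walk_seq H (b # vs) es"
| "walk_seq H _ _ \<longleftrightarrow> False"

lemma walk_seq_iff:
  "walk_seq H vs es \<longleftrightarrow> vs \<noteq> [] \<and> set vs \<subseteq> g_verts H \<and> length es + 1 = length vs \<and>
     (\<forall>i<length es. es ! i \<in> g_edges H \<and> g_ends H (es ! i) = {vs ! i, vs ! Suc i})"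
proof (induction H vs es rule: walk_seq.induct)
  case (2 H a b vs e es)
  then show ?case by (auto simp: All_less_Suc2)
qed auto

lemma walk_seq_length: "walk_seq H vs es \<Longrightarrow> length vs = Suc (length es)"
  and walk_seq_set: "walk_seq H vs es \<Longrightarrow> set vs \<subseteq> g_verts H"
  by (simp_all add: walk_seq_iff)

lemma walk_seq_append:
  "walk_seq H vs es \<Longrightarrow> walk_seq H (last vs # ws) fs \<Longrightarrow> walk_seq H (vs @ ws) (es @ fs)"
  by (induction H vs es rule: walk_seq.induct) auto

lemma walk_seq_split:
  "walk_seq H (xs @ c # ys) es \<Longrightarrow>
     walk_seq H (xs @ [c]) (take (length xs) es) \<and> walk_seq H (c # ys) (drop (length xs) es)"
proof (induction xs arbitrary: es)
  case Nil
  then show ?case by (cases ys; cases es) auto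
next
  case (Cons a xs)
  then show ?case by (cases xs; cases es) (auto dest: walk_seq_set)
qed

lemma walk_seq_rev: "walk_seq H vs es \<Longrightarrow> walk_seq H (rev vs) (rev es)"
proof (induction H vs es rule: walk_seq.induct)
  case (2 H a b vs e es)
  then have "walk_seq H (rev vs @ [b]) (rev es)" "walk_seq H [last (rev vs @ [b]), a] [e]"
    using walk_seq_set[of H "b # vs" es] by (auto simp: insert_commute)
  from walk_seq_append[OF this] show ?case by simp
qed auto

definition walk :: "mgraph \<Rightarrow> nat list \<times> nat list \<Rightarrow> nat \<Rightarrow> nat \<Rightarrow> bool" where
  "walk H P a b \<longleftrightarrow> walk_seq H (fst P) (snd P) \<and> fst P \<noteq> [] \<and> hd (fst P) = a \<and> last (fst P) = b"

lemma is_path_iff_walk: "is_path H P a b \<longleftrightarrow> walk H P a b \<and> distinct (fst P)"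
  unfolding is_path_def walk_def walk_seq_iff Let_def by auto

lemma walk_rev: "walk H (vs, es) a b \<Longrightarrow> walk H (rev vs, rev es) b a"
  unfolding walk_def by (auto simp: walk_seq_rev hd_rev last_rev)

lemma walk_append:
  assumes "walk H (vs, es) a b" "walk H (ws, fs) b c"
  shows "walk H (vs @ tl ws, es @ fs) a c"
proof -
  obtain ws' where ws: "ws = b # ws'" using assms(2) unfolding walk_def by (cases ws) auto
  then have "walk_seq H (vs @ ws') (es @ fs)"
    using assms walk_seq_append unfolding walk_def by auto
  then show ?thesis using assms ws unfolding walk_def by (cases ws') auto
qed

lemma walk_shortcut:
  assumes "walk H (vs, es) a b" "\<not> distinct vs"
  obtains vs' es' where "walk H (vs', es') a b" "length es' < length es"
proof -
  obtain xs ys zs c where vs: "vs = xs @ [c] @ ys @ [c] @ zs"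
    using not_distinct_decomp[OF assms(2)] by blast
  define es' where "es' = take (length xs) es @ drop (Suc (length ys)) (drop (length xs) es)"
  have W: "walk_seq H vs es" using assms unfolding walk_def by auto
  have "walk_seq H (xs @ [c]) (take (length xs) es)"
    and "walk_seq H (c # ys @ c # zs) (drop (length xs) es)"
    using walk_seq_split[of H xs c "ys @ c # zs" es] W vs by auto
  then have "walk_seq H ((xs @ [c]) @ zs) es'"
    using walk_seq_split[of H "c # ys" c zs] walk_seq_append unfolding es'_def by fastforce
  moreover have "length es' < length es"
    using walk_seq_length[OF W] vs unfolding es'_def by simp
  moreover have "hd ((xs @ [c]) @ zs) = a" "last ((xs @ [c]) @ zs) = b"
    using assms vs unfolding walk_def by (cases xs; cases zs; simp)+
  ultimately show ?thesis using that[of "(xs @ [c]) @ zs" es'] unfolding walk_def by force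
qed

lemma walk_imp_path:
  assumes "walk H (vs, es) a b"
  obtains vs' es' where "is_path H (vs', es') a b" "length es' \<le> length es"
    "\<not> distinct vs \<Longrightarrow> length es' < length es"
  using assms
proof (induction "length es" arbitrary: vs es thesis rule: less_induct)
  case less
  show ?case
  proof (cases "distinct vs")
    case True
    then show ?thesis using less.prems by (auto simp: is_path_iff_walk)
  next
    case False
    then obtain vs1 es1 where "walk H (vs1, es1) a b" "length es1 < length es"
      using walk_shortcut[OF less.prems(2)] by blast
    note shorter = \<open>length es1 < length es\<close>
    show ?thesis
      by (rule less.hyps[OF shorter _ \<open>walk H (vs1, es1) a b\<close>])
        (use less.prems(1) shorter False in force)
  qed
qed

lemma walk_prefix:
  assumes "walk_seq H vs es" "i \<le> length es"
  shows "walk H (take i vs @ [vs ! i], take i es) (vs ! 0) (vs ! i)"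
proof -
  have L: "length vs = Suc (length es)" using walk_seq_length[OF assms(1)] .
  then have "vs = take i vs @ vs ! i # drop (Suc i) vs" using assms(2) by (simp add: id_take_nth_drop)
  then have "walk_seq H (take i vs @ [vs ! i]) (take i es)"
    using walk_seq_split[of H "take i vs" "vs ! i" "drop (Suc i) vs" es] assms L by simp
  moreover have "hd (take i vs @ [vs ! i]) = vs ! 0"
    using L assms(2) by (cases i) (auto simp: hd_conv_nth nth_append)
  ultimately show ?thesis unfolding walk_def by simp
qed

lemma walk_suffix:
  assumes "walk_seq H vs es" "i \<le> length es"
  shows "walk H (drop i vs, drop i es) (vs ! i) (vs ! length es)"
proof -
  have L: "length vs = Suc (length es)" using walk_seq_length[OF assms(1)] .
  then have d: "vs = take i vs @ vs ! i # drop (Suc i) vs" using assms(2) by (simp add: id_take_nth_drop)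
  then have "walk_seq H (vs ! i # drop (Suc i) vs) (drop i es)"
    using walk_seq_split[of H "take i vs" "vs ! i" "drop (Suc i) vs" es] assms L by simp
  moreover have "drop i vs = vs ! i # drop (Suc i) vs" using L assms(2) by (simp add: Cons_nth_drop_Suc)
  moreover have "last (drop i vs) = vs ! length es" using L assms(2) by (simp add: last_conv_nth)
  ultimately show ?thesis unfolding walk_def by simp
qed

text \<open>The length of a shortest walk, capped at the number of vertices so that it is also defined
  between disconnected vertices.\<close>

definition gdist :: "mgraph \<Rightarrow> nat \<Rightarrow> nat \<Rightarrow> nat" where
  "gdist H a b = (LEAST n. n = card (g_verts H) \<or> (\<exists>vs es. walk H (vs, es) a b \<and> length es = n))"

lemma gdist_le_card: "gdist H a b \<le> card (g_verts H)"
  unfolding gdist_def by (rule Least_le) simp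

lemma gdist_le_walk: "walk H (vs, es) a b \<Longrightarrow> gdist H a b \<le> length es"
  unfolding gdist_def by (rule Least_le) blast

lemma gdist_walk:
  assumes "gdist H a b < card (g_verts H)"
  obtains vs es where "walk H (vs, es) a b" "length es = gdist H a b"
proof -
  have "gdist H a b = card (g_verts H) \<or> (\<exists>vs es. walk H (vs, es) a b \<and> length es = gdist H a b)"
    unfolding gdist_def by (rule LeastI[of _ "card (g_verts H)"]) simp
  with assms that show ?thesis by auto
qed

lemma gdist_sym: "gdist H a b = gdist H b a"
proof -
  have "gdist H a b \<le> gdist H b a" for a b
  proof (cases "gdist H b a < card (g_verts H)")
    case True
    then obtain vs es where "walk H (vs, es) b a" "length es = gdist H b a" by (rule gdist_walk)
    then show ?thesis using gdist_le_walk[OF walk_rev] by fastforce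
  qed (use gdist_le_card[of H a b] in simp)
  then show ?thesis by (simp add: order_antisym)
qed

lemma gdist_triangle: "gdist H a c \<le> gdist H a b + gdist H b c"
proof (cases "gdist H a b < card (g_verts H) \<and> gdist H b c < card (g_verts H)")
  case True
  then obtain vs es ws fs where "walk H (vs, es) a b" "length es = gdist H a b"
    "walk H (ws, fs) b c" "length fs = gdist H b c" by (meson gdist_walk)
  then show ?thesis using gdist_le_walk[OF walk_append] by fastforce
qed (use gdist_le_card[of H a c] in auto)

lemma gdist_self: "a \<in> g_verts H \<Longrightarrow> gdist H a a = 0"
  using gdist_le_walk[of H "[a]" "[]" a a] by (simp add: walk_def)

lemma gdist_eq_0:
  assumes "gdist H a b = 0" "g_verts H \<noteq> {}" "finite (g_verts H)"
  shows "a = b"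
proof -
  have "gdist H a b < card (g_verts H)" using assms by (simp add: card_gt_0_iff)
  then obtain vs es where "walk H (vs, es) a b" "length es = 0" using assms(1) by (metis gdist_walk)
  then show "a = b" unfolding walk_def by (cases vs) (auto simp: walk_seq_iff)
qed

lemma gdist_edge_le:
  assumes "wf_graph H" "e \<in> g_edges H" "g_ends H e = {a, b}"
  shows "gdist H a c \<le> gdist H b c + 1"
proof -
  have "a \<in> g_verts H" "b \<in> g_verts H" using assms unfolding wf_graph_def by auto
  then have "walk H ([a, b], [e]) a b" using assms(2,3) unfolding walk_def by simp
  then show ?thesis using gdist_le_walk gdist_triangle[of H a c b] by fastforce
qed

definition edge_lipschitz :: "mgraph \<Rightarrow> (nat \<Rightarrow> nat) \<Rightarrow> bool" where
  "edge_lipschitz H f \<longleftrightarrow> (\<forall>g a b. g \<in> g_edges H \<longrightarrow> g_ends H g = {a, b} \<longrightarrow> f a \<le> f b + 1)"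

lemma edge_lipschitzD:
  "edge_lipschitz H f \<Longrightarrow> g \<in> g_edges H \<Longrightarrow> g_ends H g = {a, b} \<Longrightarrow> f a \<le> f b + 1"
  unfolding edge_lipschitz_def by blast

lemma edge_lipschitz_gdist_left: "wf_graph H \<Longrightarrow> edge_lipschitz H (\<lambda>z. gdist H z c)"
  unfolding edge_lipschitz_def using gdist_edge_le by blast

lemma edge_lipschitz_gdist_right: "wf_graph H \<Longrightarrow> edge_lipschitz H (\<lambda>z. gdist H c z)"
  using edge_lipschitz_gdist_left by (subst gdist_sym) blast

lemma edge_lipschitz_add: "edge_lipschitz H f \<Longrightarrow> edge_lipschitz H (\<lambda>z. c + f z)"
  unfolding edge_lipschitz_def by force

lemma edge_lipschitz_min:
  "edge_lipschitz H f \<Longrightarrow> edge_lipschitz H g \<Longrightarrow> edge_lipschitz H (\<lambda>z. min (f z) (g z))"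
  unfolding edge_lipschitz_def by (metis min.coboundedI1 min.coboundedI2 min_def)

lemma edge_lipschitz_if:
  "edge_lipschitz H f \<Longrightarrow> edge_lipschitz H g \<Longrightarrow> edge_lipschitz H (\<lambda>z. if P then f z else g z)"
  by (cases P) auto

section \<open>Parades\<close>

lemma path_length_le_card:
  assumes "wf_graph H" "is_path H P a b"
  shows "length (fst P) \<le> card (g_verts H)"
  using assms unfolding is_path_def Let_def wf_graph_def by (metis card_mono distinct_card)

lemma finite_usp_lengths:
  assumes "wf_graph H"
  shows "finite {length (fst P) | P u v. unique_shortest_path H P u v}"
proof (rule finite_subset)
  show "{length (fst P) | P u v. unique_shortest_path H P u v} \<subseteq> {..card (g_verts H)}"
    using path_length_le_card[OF assms] unfolding unique_shortest_path_def shortest_path_def by auto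
qed simp

lemma unique_shortest_path_single:
  assumes "a \<in> g_verts H"
  shows "unique_shortest_path H ([a], []) a a"
  using assms unfolding unique_shortest_path_def shortest_path_def is_path_def Let_def
  by (force simp: Suc_le_eq length_Suc_conv)

lemma length_le_usp:
  assumes "wf_graph H" "unique_shortest_path H P a b"
  shows "length (fst P) \<le> usp H"
  unfolding usp_def using assms finite_usp_lengths by (blast intro: Max_ge)

lemma obtain_parade:
  assumes "wf_graph H"
  obtains vs es where "unique_shortest_path H (vs, es) (hd vs) (last vs)" "length vs = usp H"
proof -
  obtain a where "a \<in> g_verts H" using assms unfolding wf_graph_def by auto
  then have "{length (fst P) | P u v. unique_shortest_path H P u v} \<noteq> {}"
    using unique_shortest_path_single by fastforce
  then have "usp H \<in> {length (fst P) | P u v. unique_shortest_path H P u v}"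
    unfolding usp_def using finite_usp_lengths[OF assms] by (rule Max_in[rotated])
  then obtain vs es a b where "usp H = length vs" "unique_shortest_path H (vs, es) a b" by auto
  moreover then have "hd vs = a" "last vs = b"
    unfolding unique_shortest_path_def shortest_path_def is_path_def Let_def by auto
  ultimately show ?thesis using that by metis
qed

lemma usp_pos:
  assumes "wf_graph H"
  shows "1 \<le> usp H"
proof -
  obtain a where "a \<in> g_verts H" using assms unfolding wf_graph_def by auto
  from length_le_usp[OF assms unique_shortest_path_single[OF this]] show ?thesis by simp
qed

lemma usp_le_card:
  assumes "wf_graph H"
  shows "usp H \<le> card (g_verts H)"
  using obtain_parade[OF assms] path_length_le_card[OF assms]
  unfolding unique_shortest_path_def shortest_path_def by (metis fst_conv)

locale parade =
  fixes H :: mgraph and vs es :: "nat list"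
  assumes wf: "wf_graph H"
    and unique: "unique_shortest_path H (vs, es) (hd vs) (last vs)"
begin

abbreviation "m \<equiv> length es"

definition d0 :: "nat \<Rightarrow> nat" where "d0 z = gdist H (vs ! 0) z"

definition dm :: "nat \<Rightarrow> nat" where "dm z = gdist H z (vs ! m)"

lemma parade_is_path: "is_path H (vs, es) (hd vs) (last vs)"
  using unique unfolding unique_shortest_path_def shortest_path_def by auto

lemma parade_walk_seq: "walk_seq H vs es" and parade_distinct: "distinct vs"
  using parade_is_path unfolding is_path_iff_walk walk_def by auto

lemma length_parade: "length vs = Suc m"
  using walk_seq_length[OF parade_walk_seq] .

lemma hd_parade: "hd vs = vs ! 0"
  using length_parade by (cases vs) auto

lemma last_parade: "last vs = vs ! m"
  using length_parade by (cases vs rule: rev_cases) (auto simp: nth_append)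

lemma parade_vert: "i \<le> m \<Longrightarrow> vs ! i \<in> g_verts H"
  using walk_seq_set[OF parade_walk_seq] length_parade by (simp add: subsetD)

lemma parade_nth_eq_iff: "i \<le> m \<Longrightarrow> j \<le> m \<Longrightarrow> vs ! i = vs ! j \<longleftrightarrow> i = j"
  using parade_distinct length_parade by (simp add: nth_eq_iff_index_eq)

lemma parade_index: "z \<in> set vs \<Longrightarrow> \<exists>i \<le> m. z = vs ! i"
  using length_parade by (auto simp: in_set_conv_nth less_Suc_eq_le)

lemma parade_edge: "i < m \<Longrightarrow> es ! i \<in> g_edges H \<and> g_ends H (es ! i) = {vs ! i, vs ! Suc i}"
  using parade_walk_seq by (simp add: walk_seq_iff)

lemma finite_verts: "finite (g_verts H)" and verts_nonempty: "g_verts H \<noteq> {}"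
  using wf unfolding wf_graph_def by auto

lemma parade_length_le_card: "Suc m \<le> card (g_verts H)"
  using path_length_le_card[OF wf parade_is_path] length_parade by simp

lemma parade_shortest:
  assumes "is_path H Q (vs ! 0) (vs ! m)"
  shows "m \<le> length (snd Q)"
proof -
  have "length vs \<le> length (fst Q)"
    using unique assms hd_parade last_parade unfolding unique_shortest_path_def shortest_path_def
    by (metis fst_conv)
  moreover have "length (fst Q) = Suc (length (snd Q))" using assms unfolding is_path_def Let_def by auto
  ultimately show ?thesis using length_parade by simp
qed

lemma edge_lipschitz_d0: "edge_lipschitz H d0"
  unfolding d0_def[abs_def] using edge_lipschitz_gdist_right[OF wf] .

lemma edge_lipschitz_dm: "edge_lipschitz H dm"
  unfolding dm_def[abs_def] using edge_lipschitz_gdist_left[OF wf] .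

lemma d0_nth_le: "i \<le> m \<Longrightarrow> d0 (vs ! i) \<le> i"
  using gdist_le_walk[OF walk_prefix[OF parade_walk_seq]] unfolding d0_def by fastforce

lemma dm_nth_le: "i \<le> m \<Longrightarrow> dm (vs ! i) \<le> m - i"
  using gdist_le_walk[OF walk_suffix[OF parade_walk_seq]] unfolding dm_def by fastforce

text \<open>A shortest walk through \<open>z\<close> is as short as the parade, so by uniqueness it is the parade.\<close>

lemma on_parade:
  assumes "d0 z \<le> j" "dm z + j \<le> m"
  shows "z = vs ! j"
proof -
  have "d0 z < card (g_verts H)" "dm z < card (g_verts H)" using assms parade_length_le_card by auto
  then obtain vs1 es1 vs2 es2 where w1: "walk H (vs1, es1) (vs ! 0) z" "length es1 = d0 z"
    and w2: "walk H (vs2, es2) z (vs ! m)" "length es2 = dm z"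
    unfolding d0_def dm_def by (metis gdist_walk)
  define ws where "ws = vs1 @ tl vs2"
  have W: "walk H (ws, es1 @ es2) (vs ! 0) (vs ! m)" unfolding ws_def using walk_append[OF w1(1) w2(1)] .
  obtain vs' es' where p: "is_path H (vs', es') (vs ! 0) (vs ! m)" "length es' \<le> length (es1 @ es2)"
    "\<not> distinct ws \<Longrightarrow> length es' < length (es1 @ es2)"
    using walk_imp_path[OF W] by blast
  then have dist: "distinct ws" and len: "length (es1 @ es2) = m" and j: "d0 z = j"
    using parade_shortest[OF p(1)] w1(2) w2(2) assms by auto
  have "is_path H (ws, es1 @ es2) (hd vs) (last vs)"
    using W dist hd_parade last_parade by (simp add: is_path_iff_walk)
  moreover have "length ws = length vs"
    using W len length_parade walk_seq_length[of H ws "es1 @ es2"] unfolding walk_def by simp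
  ultimately have "ws = vs" using unique unfolding unique_shortest_path_def by auto
  moreover have "length vs1 = Suc j" "last vs1 = z" "vs1 \<noteq> []"
    using w1 j walk_seq_length[of H vs1 es1] unfolding walk_def by auto
  then have "ws ! j = z" unfolding ws_def by (simp add: nth_append last_conv_nth)
  ultimately show ?thesis by simp
qed

lemma d0_dm_ge: "m \<le> d0 z + dm z"
proof (rule ccontr)
  assume "\<not> m \<le> d0 z + dm z"
  then have "z = vs ! d0 z" "z = vs ! Suc (d0 z)" "Suc (d0 z) \<le> m"
    using on_parade[of z "d0 z"] on_parade[of z "Suc (d0 z)"] by auto
  then show False using parade_nth_eq_iff[of "d0 z" "Suc (d0 z)"] by simp
qed

lemma d0_dm_gt_off_parade:
  assumes "z \<notin> set vs"
  shows "m < d0 z + dm z"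
proof (rule ccontr)
  assume "\<not> m < d0 z + dm z"
  then have "z = vs ! d0 z" "d0 z < length vs" using on_parade[of z "d0 z"] length_parade by auto
  then show False using assms by (metis nth_mem)
qed

lemma
  assumes "i \<le> m"
  shows d0_nth: "d0 (vs ! i) = i" and dm_nth: "dm (vs ! i) = m - i"
proof -
  have "d0 (vs ! i) \<le> i" "dm (vs ! i) \<le> m - i"
    using d0_nth_le[OF assms] dm_nth_le[OF assms] .
  with d0_dm_ge[of "vs ! i"] assms show "d0 (vs ! i) = i" "dm (vs ! i) = m - i" by auto
qed

lemma parade_edge_unique:
  assumes "g \<in> g_edges H" "g_ends H g = g_ends H (es ! i)" "i < m"
  shows "g = es ! i"
proof -
  have "is_path H (vs, es[i := g]) (hd vs) (last vs)"
    using parade_is_path assms unfolding is_path_def Let_def by (auto simp: nth_list_update)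
  then have "(vs, es[i := g]) = (vs, es)"
    using unique unfolding unique_shortest_path_def by (metis fst_conv)
  then have "es[i := g] ! i = es ! i" by simp
  then show ?thesis using assms(3) by simp
qed

lemma edge_between_parade_verts:
  assumes "g \<in> g_edges H" "g_ends H g = {vs ! a, vs ! b}" "a \<le> m" "b \<le> m"
  shows "(b = Suc a \<and> g = es ! a) \<or> (a = Suc b \<and> g = es ! b)"
proof -
  have "g_ends H g = {vs ! b, vs ! a}" using assms(2) by blast
  then have "d0 (vs ! a) \<le> d0 (vs ! b) + 1" "d0 (vs ! b) \<le> d0 (vs ! a) + 1"
    using edge_lipschitzD[OF edge_lipschitz_d0 assms(1)] assms(2) by blast+
  then have "a \<le> b + 1" "b \<le> a + 1" using d0_nth assms(3,4) by auto
  moreover have "card (g_ends H g) = 2" using wf assms(1) unfolding wf_graph_def by auto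
  then have "a \<noteq> b" using assms(2) by auto
  ultimately consider "b = Suc a" | "a = Suc b" by linarith
  then show ?thesis
  proof cases
    case 1
    then show ?thesis using assms parade_edge[of a] parade_edge_unique[OF assms(1)] by simp
  next
    case 2
    then show ?thesis using assms parade_edge[of b] parade_edge_unique[OF assms(1)]
      by (simp add: insert_commute)
  qed
qed

lemma parade_edgeE:
  assumes "g \<in> g_edges H" "g_ends H g \<subseteq> set vs"
  obtains c where "c < m" "g = es ! c" "g_ends H g = {vs ! c, vs ! Suc c}"
proof -
  have "card (g_ends H g) = 2" using wf assms(1) unfolding wf_graph_def by auto
  then obtain x y where xy: "g_ends H g = {x, y}" by (rule card_2_obtain)
  moreover have "x \<in> set vs" "y \<in> set vs" using assms(2) xy by auto
  ultimately obtain i k where ik: "i \<le> m" "x = vs ! i" "k \<le> m" "y = vs ! k"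
    using parade_index by meson
  then have "k = Suc i \<and> g = es ! i \<or> i = Suc k \<and> g = es ! k"
    using edge_between_parade_verts[OF assms(1)] xy by simp
  then show ?thesis
  proof
    assume "k = Suc i \<and> g = es ! i"
    then show ?thesis using that[of i] xy ik by simp
  next
    assume "i = Suc k \<and> g = es ! k"
    then show ?thesis using that[of k] xy ik by (simp add: insert_commute)
  qed
qed

end

section \<open>Certified unique shortest paths\<close>

lemma edge_lipschitz_walk:
  assumes "edge_lipschitz H f" "walk_seq H qs gs" "i \<le> j" "j \<le> length gs"
  shows "f (qs ! j) \<le> f (qs ! i) + (j - i) \<and> f (qs ! i) \<le> f (qs ! j) + (j - i)"
  using assms(3)
proof (induction j rule: dec_induct)
  case (step k)
  then have "gs ! k \<in> g_edges H" "g_ends H (gs ! k) = {qs ! k, qs ! Suc k}"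
    using assms(2,4) by (auto simp: walk_seq_iff)
  moreover have "{qs ! k, qs ! Suc k} = {qs ! Suc k, qs ! k}" by blast
  ultimately have "f (qs ! Suc k) \<le> f (qs ! k) + 1" "f (qs ! k) \<le> f (qs ! Suc k) + 1"
    using edge_lipschitzD[OF assms(1)] by metis+
  with step show ?case by presburger
qed simp

text \<open>Two potentials, vanishing at the two ends of \<open>ws\<close> and growing by at most one per edge,
  pin the \<open>i\<close>-th vertex of every walk with at most \<open>n\<close> edges from \<open>ws ! 0\<close> to \<open>ws ! n\<close> to
  \<open>ws ! i\<close>; this certifies that \<open>(ws, fs)\<close> is a unique shortest path.\<close>

locale usp_certificate =
  fixes H :: mgraph and ws fs :: "nat list" and n :: nat and px py :: "nat \<Rightarrow> nat"
  assumes cert_walk: "walk_seq H ws fs" and cert_distinct: "distinct ws" and cert_length: "length fs = n"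
    and cert_lipschitz: "edge_lipschitz H px" "edge_lipschitz H py"
    and cert_start: "px (ws ! 0) = 0" and cert_stop: "py (ws ! n) = 0"
    and cert_pinned: "\<And>z j. z \<in> g_verts H \<Longrightarrow> px z \<le> j \<Longrightarrow> py z + j \<le> n \<Longrightarrow> z = ws ! j"
    and cert_no_parallel:
      "\<And>j g. j < n \<Longrightarrow> g \<in> g_edges H \<Longrightarrow> g_ends H g = g_ends H (fs ! j) \<Longrightarrow> g = fs ! j"
begin

lemma length_ws: "length ws = Suc n"
  using walk_seq_length[OF cert_walk] cert_length by simp

lemma short_walk_eq:
  assumes Q: "walk H (qs, gs) (ws ! 0) (ws ! n)" "length gs \<le> n"
  shows "(qs, gs) = (ws, fs)"
proof -
  define k where "k = length gs"
  have Wq: "walk_seq H qs gs" and lq: "length qs = Suc k"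
    using Q walk_seq_length unfolding walk_def k_def by auto
  have q0: "qs ! 0 = ws ! 0" and qk: "qs ! k = ws ! n"
    using Q lq unfolding walk_def by (auto simp: hd_conv_nth last_conv_nth)
  have qs_ws: "qs ! i = ws ! i" if "i \<le> k" for i
  proof (rule cert_pinned)
    show "qs ! i \<in> g_verts H" using walk_seq_set[OF Wq] lq that by auto
    show "px (qs ! i) \<le> i"
      using edge_lipschitz_walk[OF cert_lipschitz(1) Wq, of 0 i] q0 cert_start that k_def by simp
    show "py (qs ! i) + i \<le> n"
      using edge_lipschitz_walk[OF cert_lipschitz(2) Wq, of i k] qk cert_stop that Q(2) k_def by simp
  qed
  have "ws ! k = ws ! n" using qs_ws[of k] qk by simp
  then have kn: "k = n" using cert_distinct length_ws Q(2) k_def by (simp add: nth_eq_iff_index_eq)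
  then have "qs = ws" using qs_ws lq length_ws by (simp add: nth_equalityI)
  moreover have "gs = fs"
  proof (rule nth_equalityI)
    show "length gs = length fs" using kn cert_length k_def by simp
    fix j assume "j < length gs"
    moreover have "gs ! j \<in> g_edges H" "g_ends H (gs ! j) = {qs ! j, qs ! Suc j}"
                  "g_ends H (fs ! j) = {ws ! j, ws ! Suc j}"
      using Wq cert_walk calculation kn cert_length k_def by (auto simp: walk_seq_iff)
    ultimately show "gs ! j = fs ! j" using cert_no_parallel \<open>qs = ws\<close> kn k_def by simp
  qed
  ultimately show ?thesis by simp
qed

lemma short_path_eq:
  assumes P: "is_path H (qs, gs) (ws ! 0) (ws ! n)" and "length qs \<le> length ws"
  shows "(qs, gs) = (ws, fs)"
proof (rule short_walk_eq)
  show "walk H (qs, gs) (ws ! 0) (ws ! n)" using P unfolding is_path_iff_walk by simp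
  then have "length qs = Suc (length gs)" using walk_seq_length unfolding walk_def by auto
  then show "length gs \<le> n" using assms(2) length_ws by simp
qed

theorem certified_unique_shortest_path: "unique_shortest_path H (ws, fs) (ws ! 0) (ws ! n)"
  unfolding unique_shortest_path_def shortest_path_def
proof (intro conjI allI impI)
  show "is_path H (ws, fs) (ws ! 0) (ws ! n)"
    using cert_walk cert_distinct length_ws unfolding is_path_iff_walk walk_def
    by (cases ws rule: rev_cases) (auto simp: hd_conv_nth nth_append)
next
  fix Q assume Q: "is_path H Q (ws ! 0) (ws ! n)"
  show "length (fst (ws, fs)) \<le> length (fst Q)"
  proof (rule ccontr)
    assume "\<not> ?thesis"
    then have "Q = (ws, fs)" using short_path_eq[of "fst Q" "snd Q"] Q by simp
    with \<open>\<not> ?thesis\<close> show False by simp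
  qed
next
  fix Q assume "is_path H Q (ws ! 0) (ws ! n) \<and> length (fst Q) = length (fst (ws, fs))"
  then show "Q = (ws, fs)" using short_path_eq[of "fst Q" "snd Q"] by simp
qed

end

section \<open>Contracting an edge next to a parade\<close>

definition redirect :: "nat \<Rightarrow> nat \<Rightarrow> nat \<Rightarrow> nat" where
  "redirect u v x = (if x = v then u else x)"

lemma redirect_image_eq:
  assumes "redirect u v ` {a, b} = {x, y}" "x \<noteq> u" "y \<noteq> u"
  shows "{a, b} = {x, y}"
proof -
  have "redirect u v a \<noteq> u" "redirect u v b \<noteq> u" using assms by auto
  then have "redirect u v a = a" "redirect u v b = b" unfolding redirect_def by auto
  then show ?thesis using assms(1) by simp
qed

text \<open>Identifying \<open>v\<close> with \<open>u\<close> and deleting every \<open>u\<close>--\<open>v\<close> edge: the contraction of a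
  \<open>u\<close>--\<open>v\<close> edge after its parallel edges have been deleted.\<close>

definition merge :: "mgraph \<Rightarrow> nat \<Rightarrow> nat \<Rightarrow> mgraph" where
  "merge H u v = \<lparr> g_verts = g_verts H - {v}, g_edges = {f \<in> g_edges H. g_ends H f \<noteq> {u, v}},
      g_ends = (\<lambda>f. redirect u v ` g_ends H f) \<rparr>"

definition add_edge :: "mgraph \<Rightarrow> nat \<Rightarrow> nat \<Rightarrow> nat \<Rightarrow> mgraph" where
  "add_edge H l p q = H\<lparr>g_edges := insert l (g_edges H), g_ends := (g_ends H)(l := {p, q})\<rparr>"

definition fresh_edge :: "mgraph \<Rightarrow> nat" where
  "fresh_edge H = Suc (Max (insert 0 (g_edges H)))"

lemma subgraph_refl: "subgraph G G"
  unfolding subgraph_def by simp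

lemma subgraph_add_edge: "l \<notin> g_edges G \<Longrightarrow> subgraph G (add_edge G l p q)"
  unfolding subgraph_def add_edge_def by auto

definition spanning_subgraph :: "mgraph \<Rightarrow> mgraph \<Rightarrow> bool" where
  "spanning_subgraph G H \<longleftrightarrow> subgraph G H \<and> g_verts H = g_verts G"

lemma less_fresh_edge: "finite (g_edges H) \<Longrightarrow> l \<in> g_edges H \<Longrightarrow> l < fresh_edge H"
  unfolding fresh_edge_def using Max_ge[of "insert 0 (g_edges H)" l] by (simp add: less_Suc_eq_le)

lemma fresh_edge_notin: "finite (g_edges H) \<Longrightarrow> fresh_edge H \<notin> g_edges H"
  using less_fresh_edge by blast

lemma merge_simps [simp]:
  "g_verts (merge H u v) = g_verts H - {v}"
  "g_edges (merge H u v) = {f \<in> g_edges H. g_ends H f \<noteq> {u, v}}"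
  "g_ends (merge H u v) f = redirect u v ` g_ends H f"
  unfolding merge_def by simp_all

lemma add_edge_simps [simp]:
  "g_verts (add_edge H l p q) = g_verts H"
  "g_edges (add_edge H l p q) = insert l (g_edges H)"
  "g_ends (add_edge H l p q) f = (if f = l then {p, q} else g_ends H f)"
  unfolding add_edge_def by simp_all

lemma wf_merge:
  assumes "wf_graph H" "u \<in> g_verts H" "u \<noteq> v"
  shows "wf_graph (merge H u v)"
  unfolding wf_graph_def
proof (intro conjI ballI)
  fix f assume "f \<in> g_edges (merge H u v)"
  then have ends: "g_ends H f \<subseteq> g_verts H" "card (g_ends H f) = 2" "g_ends H f \<noteq> {u, v}"
    using assms(1) unfolding wf_graph_def by auto
  obtain a b where ab: "g_ends H f = {a, b}" "a \<noteq> b" using ends(2) by (rule card_2_obtain)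
  then have "redirect u v a \<noteq> redirect u v b"
    using ends(3) assms(3) unfolding redirect_def by (auto simp: insert_commute)
  then show "card (g_ends (merge H u v) f) = 2" using ab by simp
  show "g_ends (merge H u v) f \<subseteq> g_verts (merge H u v)"
    using ends(1) assms(2,3) by (auto simp: redirect_def)
qed (use assms in \<open>auto simp: wf_graph_def\<close>)

lemma wf_add_edge:
  assumes "wf_graph H" "l \<notin> g_edges H" "p \<in> g_verts H" "q \<in> g_verts H" "p \<noteq> q"
  shows "wf_graph (add_edge H l p q)"
  using assms unfolding wf_graph_def by auto

lemma edge_lipschitz_merge:
  assumes "wf_graph H" "edge_lipschitz H f" "f u = f v"
  shows "edge_lipschitz (merge H u v) f"
  unfolding edge_lipschitz_def
proof (intro allI impI)
  fix g a b assume g: "g \<in> g_edges (merge H u v)" "g_ends (merge H u v) g = {a, b}"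
  then have gE: "g \<in> g_edges H" by simp
  then have "card (g_ends H g) = 2" using assms(1) unfolding wf_graph_def by auto
  then obtain a0 b0 where ab: "g_ends H g = {a0, b0}" by (rule card_2_obtain)
  then have "{a, b} = {redirect u v a0, redirect u v b0}" using g by simp
  moreover have "f (redirect u v z) = f z" for z using assms(3) unfolding redirect_def by simp
  moreover have "f a0 \<le> f b0 + 1" "f b0 \<le> f a0 + 1"
    using edge_lipschitzD[OF assms(2) gE] ab by (metis insert_commute)+
  ultimately show "f a \<le> f b + 1" by (auto simp: doubleton_eq_iff)
qed

lemma edge_lipschitz_add_edge:
  assumes "edge_lipschitz H f" "f p \<le> f q + 1" "f q \<le> f p + 1"
  shows "edge_lipschitz (add_edge H l p q) f"
  using assms unfolding edge_lipschitz_def by (auto simp: doubleton_eq_iff)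

locale parade_edge = parade +
  fixes u v e :: nat
  assumes edge: "e \<in> g_edges H" and edge_ends: "g_ends H e = {u, v}" and long: "2 \<le> m"
begin

lemma es_nonempty: "es \<noteq> []"
  using long by auto

lemma edge_verts: "u \<noteq> v" "u \<in> g_verts H" "v \<in> g_verts H"
  using wf edge edge_ends unfolding wf_graph_def by (auto dest!: bspec[of _ _ e])

lemma wf_merge_uv: "wf_graph (merge H u v)"
  using wf_merge[OF wf] edge_verts by blast

definition dE :: "nat \<Rightarrow> nat" where "dE z = min (gdist H z u) (gdist H z v)"

lemma dE_u: "dE u = 0" and dE_v: "dE v = 0"
  unfolding dE_def using gdist_self edge_verts by auto

lemma edge_lipschitz_dE: "edge_lipschitz H dE"
  unfolding dE_def[abs_def] using edge_lipschitz_min edge_lipschitz_gdist_left[OF wf] by blast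

lemma d0_triangle: "d0 a \<le> d0 z + gdist H z a"
  unfolding d0_def using gdist_triangle by blast

lemma dm_triangle: "dm a \<le> gdist H z a + dm z"
  unfolding dm_def using gdist_triangle gdist_sym by metis

lemma d0_dE: "min (d0 u) (d0 v) \<le> d0 z + dE z"
  using d0_triangle[of u z] d0_triangle[of v z] unfolding dE_def min_def by auto

lemma dm_dE: "min (dm u) (dm v) \<le> dE z + dm z"
  using dm_triangle[of u z] dm_triangle[of v z] unfolding dE_def min_def by auto

end

text \<open>If the merged vertex can be placed at position \<open>s\<close> without shortening the parade, drop
  \<open>vs ! s\<close> from the parade and bridge the gap by a new edge; the remaining \<open>m\<close> vertices still
  form a unique shortest path.\<close>

locale parade_bypass = parade_edge +
  fixes s :: nat
  assumes s_le: "s \<le> m"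
    and u_on: "u \<in> set vs \<Longrightarrow> u = vs ! s" and v_on: "v \<in> set vs \<Longrightarrow> v = vs ! s"
    and d0_uv: "s \<le> d0 u" "s \<le> d0 v" and dm_uv: "m - s \<le> dm u" "m - s \<le> dm v"
begin

definition bridged :: bool where "bridged \<longleftrightarrow> 0 < s \<and> s < m"

definition bridge :: nat where "bridge = fresh_edge (merge H u v)"

definition H' :: mgraph where
  "H' = (if bridged then add_edge (merge H u v) bridge (vs ! (s - 1)) (vs ! Suc s) else merge H u v)"

definition skip :: "nat \<Rightarrow> nat" where "skip j = (if j < s then j else Suc j)"

definition ws :: "nat list" where "ws = map (\<lambda>j. vs ! skip j) [0..<m]"

definition fs :: "nat list" where
  "fs = map (\<lambda>j. if Suc j < s then es ! j else if Suc j = s then bridge else es ! Suc j) [0..<m - 1]"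

text \<open>Bounds for the distances in \<open>H'\<close> from the two ends of \<open>ws\<close>: along the old parade, through
  the merged vertex, or through the new edge.\<close>

definition px :: "nat \<Rightarrow> nat" where
  "px z = min (min (d0 z) (s + dE z)) (if s < m then s + gdist H (vs ! Suc s) z else d0 z)"

definition py :: "nat \<Rightarrow> nat" where
  "py z = min (min (dm z) (m - s + dE z)) (if 0 < s then m - s + gdist H (vs ! (s - 1)) z else dm z)"

lemma off_uv: "i \<le> m \<Longrightarrow> i \<noteq> s \<Longrightarrow> vs ! i \<noteq> u \<and> vs ! i \<noteq> v"
  using u_on v_on parade_nth_eq_iff[of i s] s_le length_parade by (metis nth_mem le_imp_less_Suc)

lemma redirect_off: "i \<le> m \<Longrightarrow> i \<noteq> s \<Longrightarrow> redirect u v (vs ! i) = vs ! i"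
  using off_uv unfolding redirect_def by simp

lemma bridge_fresh: "bridge \<notin> g_edges (merge H u v)"
  unfolding bridge_def using fresh_edge_notin wf_merge_uv unfolding wf_graph_def by blast

lemma wf_H': "wf_graph H'"
proof (cases bridged)
  case True
  then have "s - 1 \<le> m" "Suc s \<le> m" "s - 1 \<noteq> s" "Suc s \<noteq> s" "s - 1 \<noteq> Suc s"
    unfolding bridged_def by auto
  then have "vs ! (s - 1) \<in> g_verts (merge H u v)" "vs ! Suc s \<in> g_verts (merge H u v)"
    "vs ! (s - 1) \<noteq> vs ! Suc s"
    using off_uv parade_vert parade_nth_eq_iff by auto
  with True show ?thesis unfolding H'_def using wf_add_edge[OF wf_merge_uv bridge_fresh] by simp
qed (simp add: H'_def wf_merge_uv)

lemma spanning_H': "spanning_subgraph (merge H u v) H'"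
  using subgraph_add_edge[OF bridge_fresh] subgraph_refl
  unfolding spanning_subgraph_def H'_def by (simp del: merge_simps)

lemma H'_edgesE:
  assumes "g \<in> g_edges H'"
  obtains (old) "g \<in> g_edges (merge H u v)" "g_ends H' g = g_ends (merge H u v) g"
    | (new) "bridged" "g = bridge"
proof (cases "bridged \<and> g = bridge")
  case False
  then show ?thesis using assms old unfolding H'_def by (auto simp del: merge_simps split: if_splits)
qed (use new in blast)

lemma bridge_ends: "bridged \<Longrightarrow> bridge \<in> g_edges H' \<and> g_ends H' bridge = {vs ! (s - 1), vs ! Suc s}"
  unfolding H'_def by simp

lemma parade_edge_H':
  assumes "i < m" "i \<noteq> s" "Suc i \<noteq> s"
  shows "es ! i \<in> g_edges H' \<and> g_ends H' (es ! i) = {vs ! i, vs ! Suc i}"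
proof -
  have e: "es ! i \<in> g_edges H" "g_ends H (es ! i) = {vs ! i, vs ! Suc i}" using parade_edge assms(1) by auto
  then have "g_ends H (es ! i) \<noteq> {u, v}" using off_uv[of i] off_uv[of "Suc i"] assms by (auto simp: doubleton_eq_iff)
  then show ?thesis using e spanning_H' redirect_off[of i] redirect_off[of "Suc i"] assms
    unfolding spanning_subgraph_def subgraph_def by auto
qed

lemma length_ws: "length ws = m" and length_fs: "length fs = m - 1"
  unfolding ws_def fs_def by simp_all

lemma ws_nth: "j < m \<Longrightarrow> ws ! j = vs ! skip j"
  unfolding ws_def by simp

lemma skip_le: "j < m \<Longrightarrow> skip j \<le> m" and skip_ne: "skip j \<noteq> s"
  unfolding skip_def using s_le by auto

lemma fs_nth: "j < m - 1 \<Longrightarrow> fs ! j = (if Suc j < s then es ! j else if Suc j = s then bridge else es ! Suc j)"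
  unfolding fs_def by simp

lemma fs_edge:
  assumes "j < m - 1"
  shows "fs ! j \<in> g_edges H' \<and> g_ends H' (fs ! j) = {ws ! j, ws ! Suc j}"
proof -
  note fs = fs_nth[OF assms]
  consider "Suc j < s" | "Suc j = s" | "s \<le> j" by linarith
  then show ?thesis
  proof cases
    case 2
    then have "bridged" using assms unfolding bridged_def by auto
    then show ?thesis using bridge_ends assms fs ws_nth 2 unfolding skip_def by auto
  qed (use parade_edge_H'[of j] parade_edge_H'[of "Suc j"] assms fs ws_nth in \<open>auto simp: skip_def\<close>)
qed

lemma walk_seq_ws: "walk_seq H' ws fs"
  unfolding walk_seq_iff
proof (intro conjI allI impI)
  show "ws \<noteq> []" "length fs + 1 = length ws" using length_ws length_fs long by auto
  show "set ws \<subseteq> g_verts H'"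
  proof
    fix z assume "z \<in> set ws"
    then obtain j where j: "j < m" "z = vs ! skip j" using length_ws ws_nth by (auto simp: in_set_conv_nth)
    then have "z \<noteq> v" "z \<in> g_verts H" using off_uv skip_le skip_ne parade_vert by auto
    then show "z \<in> g_verts H'" using spanning_H' unfolding spanning_subgraph_def by simp
  qed
qed (use fs_edge length_fs in auto)

lemma distinct_ws: "distinct ws"
proof -
  have "ws ! i \<noteq> ws ! j" if "i < m" "j < m" "i \<noteq> j" for i j
    using that ws_nth parade_nth_eq_iff[of "skip i" "skip j"] skip_le unfolding skip_def by auto
  then show ?thesis using length_ws by (auto simp: distinct_conv_nth)
qed

lemma edge_lipschitz_H':
  assumes "edge_lipschitz H f" "f u = f v"
    and "bridged \<Longrightarrow> f (vs ! (s - 1)) \<le> f (vs ! Suc s) + 1 \<and> f (vs ! Suc s) \<le> f (vs ! (s - 1)) + 1"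
  shows "edge_lipschitz H' f"
  using edge_lipschitz_merge[OF wf assms(1,2)] edge_lipschitz_add_edge assms(3)
  unfolding H'_def by (simp del: merge_simps)

lemma px_uv: "px u = s" "px v = s" and py_uv: "py u = m - s" "py v = m - s"
  unfolding px_def py_def using d0_uv dm_uv dE_u dE_v by (auto simp: min_def)

lemma bridge_potentials:
  assumes bridged
  shows "px (vs ! (s - 1)) = s - 1" "px (vs ! Suc s) = s"
    "py (vs ! (s - 1)) = m - s" "py (vs ! Suc s) = m - s - 1"
proof -
  have s: "0 < s" "s < m" using assms unfolding bridged_def by auto
  then have d: "d0 (vs ! (s - 1)) = s - 1" "d0 (vs ! Suc s) = Suc s"
    "dm (vs ! (s - 1)) = m - s + 1" "dm (vs ! Suc s) = m - s - 1"
    "gdist H (vs ! Suc s) (vs ! Suc s) = 0" "gdist H (vs ! (s - 1)) (vs ! (s - 1)) = 0"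
    using d0_nth dm_nth gdist_self parade_vert by auto
  show "px (vs ! (s - 1)) = s - 1" unfolding px_def using s d by (simp add: min_def; arith)
  show "px (vs ! Suc s) = s" unfolding px_def using s d by (simp add: min_def; arith)
  show "py (vs ! (s - 1)) = m - s" unfolding py_def using s d by (simp add: min_def; arith)
  show "py (vs ! Suc s) = m - s - 1" unfolding py_def using s d by (simp add: min_def; arith)
qed

lemma edge_lipschitz_px: "edge_lipschitz H' px"
proof (rule edge_lipschitz_H')
  show "edge_lipschitz H px" unfolding px_def[abs_def]
    by (intro edge_lipschitz_min edge_lipschitz_add edge_lipschitz_if edge_lipschitz_d0
        edge_lipschitz_dE edge_lipschitz_gdist_right[OF wf])
qed (use px_uv bridge_potentials in auto)

lemma edge_lipschitz_py: "edge_lipschitz H' py"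
proof (rule edge_lipschitz_H')
  show "edge_lipschitz H py" unfolding py_def[abs_def]
    by (intro edge_lipschitz_min edge_lipschitz_add edge_lipschitz_if edge_lipschitz_dm
        edge_lipschitz_dE edge_lipschitz_gdist_right[OF wf])
qed (use py_uv bridge_potentials in auto)

lemma px_le: "px z \<le> d0 z" "s < m \<Longrightarrow> px z \<le> s + gdist H (vs ! Suc s) z"
  and py_le: "py z \<le> dm z" "0 < s \<Longrightarrow> py z \<le> m - s + gdist H (vs ! (s - 1)) z"
  unfolding px_def py_def by auto

lemma px_start: "px (ws ! 0) = 0"
proof (cases "s = 0")
  case True
  then have "ws ! 0 = vs ! Suc s" using ws_nth[of 0] es_nonempty unfolding skip_def by simp
  then show ?thesis using px_le(2)[of "ws ! 0"] True es_nonempty gdist_self parade_vert long by simp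
next
  case False
  then have "ws ! 0 = vs ! 0" using ws_nth[of 0] es_nonempty unfolding skip_def by simp
  then show ?thesis using px_le(1)[of "ws ! 0"] d0_nth[of 0] by simp
qed

lemma py_stop: "py (ws ! (m - 1)) = 0"
proof (cases "s = m")
  case True
  then have "ws ! (m - 1) = vs ! (s - 1)" using ws_nth[of "m - 1"] es_nonempty unfolding skip_def by simp
  then show ?thesis using py_le(2)[of "ws ! (m - 1)"] True es_nonempty gdist_self parade_vert long by simp
next
  case False
  then have "\<not> m - 1 < s" "Suc (m - 1) = m" using s_le long by linarith+
  then have "ws ! (m - 1) = vs ! m" using ws_nth[of "m - 1"] es_nonempty unfolding skip_def by simp
  then show ?thesis using py_le(1)[of "ws ! (m - 1)"] dm_nth[of m] by simp
qed

lemma pinned: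
  assumes "px z \<le> j" "py z + j \<le> m - 1"
  shows "z = ws ! j"
proof -
  have j: "j < m" using assms(2) long by linarith
  have x: "d0 z \<le> j \<or> (s < m \<and> s + gdist H (vs ! Suc s) z \<le> j) \<or> s + dE z \<le> j"
    using assms(1) unfolding px_def by (auto simp: min_le_iff_disj split: if_splits)
  have y: "dm z + j \<le> m - 1 \<or> (0 < s \<and> m - s + gdist H (vs ! (s - 1)) z + j \<le> m - 1) \<or>
      m - s + dE z + j \<le> m - 1"
  proof -
    have "py z \<le> m - 1 - j" using assms(2) by linarith
    then show ?thesis unfolding py_def using j by (auto simp: min_le_iff_disj split: if_splits)
  qed
  have "m \<le> d0 z + dm z" "s \<le> d0 z + dE z" "m - s \<le> dE z + dm z"
    using d0_dm_ge d0_dE[of z] dm_dE[of z] d0_uv dm_uv by auto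
  with x y s_le j consider (before) "d0 z \<le> j" "0 < s" "m - s + gdist H (vs ! (s - 1)) z + j \<le> m - 1"
    | (after) "s < m" "s + gdist H (vs ! Suc s) z \<le> j" "dm z + j \<le> m - 1"
    by linarith
  then show ?thesis
  proof cases
    case before
    have "dm z \<le> gdist H (vs ! (s - 1)) z + dm (vs ! (s - 1))" by (rule dm_triangle)
    moreover have "dm (vs ! (s - 1)) = m - (s - 1)" using dm_nth s_le by simp
    ultimately have "dm z + j \<le> m" "j < s" using before s_le by linarith+
    then have "z = vs ! j" using before on_parade by blast
    then show ?thesis using ws_nth j \<open>j < s\<close> unfolding skip_def by simp
  next
    case after
    have "d0 z \<le> d0 (vs ! Suc s) + gdist H (vs ! Suc s) z" by (rule d0_triangle)
    moreover have "d0 (vs ! Suc s) = Suc s" using d0_nth after(1) by simp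
    ultimately have "d0 z \<le> Suc j" "s \<le> j" using after by linarith+
    then have "z = vs ! Suc j" using after on_parade by auto
    then show ?thesis using ws_nth j \<open>s \<le> j\<close> unfolding skip_def by simp
  qed
qed

lemma bridge_position:
  assumes "bridged" "j < m - 1" "g_ends H' bridge = {vs ! skip j, vs ! skip (Suc j)}"
  shows "Suc j = s"
proof -
  have b: "s - 1 \<le> m" "Suc s \<le> m" and idx: "skip j \<le> m" "skip (Suc j) \<le> m"
    using assms(1,2) skip_le unfolding bridged_def by auto
  have "{vs ! (s - 1), vs ! Suc s} = {vs ! skip j, vs ! skip (Suc j)}"
    using assms(1,3) bridge_ends by simp
  then have "s - 1 = skip j \<and> Suc s = skip (Suc j) \<or> s - 1 = skip (Suc j) \<and> Suc s = skip j"
    using parade_nth_eq_iff[OF b(1) idx(1)] parade_nth_eq_iff[OF b(2) idx(2)]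
      parade_nth_eq_iff[OF b(1) idx(2)] parade_nth_eq_iff[OF b(2) idx(1)]
    by (simp add: doubleton_eq_iff)
  then show ?thesis using assms(1) unfolding skip_def bridged_def by (auto split: if_splits)
qed

lemma no_parallel:
  assumes j: "j < m - 1" and g: "g \<in> g_edges H'" "g_ends H' g = g_ends H' (fs ! j)"
  shows "g = fs ! j"
proof -
  have ends: "g_ends H' g = {vs ! skip j, vs ! skip (Suc j)}" using g j fs_edge ws_nth by simp
  have idx: "skip j \<le> m" "skip (Suc j) \<le> m" using skip_le j by auto
  from g(1) show ?thesis
  proof (cases rule: H'_edgesE)
    case new
    then show ?thesis using bridge_position[OF new(1) j] ends fs_nth[OF j] by simp
  next
    case old
    then have gE: "g \<in> g_edges H" by simp
    have "card (g_ends H g) = 2" using wf gE unfolding wf_graph_def by auto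
    then obtain a b where ab: "g_ends H g = {a, b}" by (rule card_2_obtain)
    have "redirect u v ` {a, b} = {vs ! skip j, vs ! skip (Suc j)}" using old ends ab by simp
    moreover have "vs ! skip j \<noteq> u" "vs ! skip (Suc j) \<noteq> u" using off_uv idx skip_ne by auto
    ultimately have "g_ends H g = {vs ! skip j, vs ! skip (Suc j)}"
      using redirect_image_eq ab by metis
    moreover have "skip j < skip (Suc j)" unfolding skip_def by simp
    ultimately have step: "skip (Suc j) = Suc (skip j)" and "g = es ! skip j"
      using edge_between_parade_verts[OF gE _ idx] by auto
    have "Suc j \<noteq> s" using step unfolding skip_def by (auto split: if_splits)
    then have "fs ! j = es ! skip j" using fs_nth[OF j] unfolding skip_def by auto
    then show ?thesis using \<open>g = es ! skip j\<close> by simp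
  qed
qed

lemma bypass_parade: "m \<le> usp H'"
proof -
  have "usp_certificate H' ws fs (m - 1) px py"
    by unfold_locales (use walk_seq_ws distinct_ws length_fs edge_lipschitz_px edge_lipschitz_py
        px_start py_stop pinned no_parallel in auto)
  then have "unique_shortest_path H' (ws, fs) (ws ! 0) (ws ! (m - 1))"
    by (rule usp_certificate.certified_unique_shortest_path)
  from length_le_usp[OF wf_H' this] show ?thesis using length_ws by simp
qed

end

text \<open>If the contracted edge joins consecutive parade vertices, the parade itself shrinks by
  one vertex and stays a unique shortest path.\<close>

locale parade_contract = parade_edge +
  fixes s :: nat
  assumes s_less: "s < m" and uv_parade: "{u, v} = {vs ! s, vs ! Suc s}"
begin

definition pos_u :: nat where "pos_u = (if v = vs ! s then Suc s else s)"

definition pos_v :: nat where "pos_v = (if v = vs ! s then s else Suc s)"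

definition merged_index :: "nat \<Rightarrow> nat" where
  "merged_index i = (if i = pos_v then pos_u else i)"

definition skip :: "nat \<Rightarrow> nat" where "skip j = (if j < pos_v then j else Suc j)"

definition keep :: "nat \<Rightarrow> nat" where "keep j = (if j < s then j else Suc j)"

definition ws :: "nat list" where "ws = map (\<lambda>j. vs ! skip j) [0..<m]"

definition fs :: "nat list" where "fs = map (\<lambda>j. es ! keep j) [0..<m - 1]"

definition px :: "nat \<Rightarrow> nat" where "px z = min (d0 z) (s + dE z)"

definition py :: "nat \<Rightarrow> nat" where "py z = min (dm z) (m - s - 1 + dE z)"

lemma pos_uv: "pos_u = s \<and> pos_v = Suc s \<or> pos_u = Suc s \<and> pos_v = s"
  unfolding pos_u_def pos_v_def by simp

lemma u_nth: "u = vs ! pos_u" and v_nth: "v = vs ! pos_v"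
  using uv_parade edge_verts(1) unfolding pos_u_def pos_v_def by (auto simp: doubleton_eq_iff)

lemma dE_parade: "dE z = min (gdist H z (vs ! s)) (gdist H z (vs ! Suc s))"
  unfolding dE_def using uv_parade by (auto simp: doubleton_eq_iff min.commute)

lemma redirect_nth: "i \<le> m \<Longrightarrow> redirect u v (vs ! i) = vs ! merged_index i"
  using parade_nth_eq_iff[of i pos_v] pos_uv s_less u_nth v_nth unfolding redirect_def merged_index_def
  by auto

lemma length_ws: "length ws = m" and length_fs: "length fs = m - 1"
  unfolding ws_def fs_def by simp_all

lemma ws_nth: "j < m \<Longrightarrow> ws ! j = vs ! skip j" and fs_nth: "j < m - 1 \<Longrightarrow> fs ! j = es ! keep j"
  unfolding ws_def fs_def by simp_all

lemma skip_le: "j < m \<Longrightarrow> skip j \<le> m" and skip_ne: "skip j \<noteq> pos_v"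
  unfolding skip_def by auto

lemma set_ws: "set ws \<subseteq> set vs"
  using skip_le length_parade unfolding ws_def by (auto simp: less_Suc_eq_le)

lemma non_contracted_edge: "k < m \<Longrightarrow> k \<noteq> s \<Longrightarrow> g_ends H (es ! k) \<noteq> {u, v}"
  using parade_edge[of k] parade_nth_eq_iff uv_parade s_less by (auto simp: doubleton_eq_iff)

lemma merge_parade_edge:
  assumes "k < m" "k \<noteq> s"
  shows "es ! k \<in> g_edges (merge H u v) \<and>
    g_ends (merge H u v) (es ! k) = {vs ! merged_index k, vs ! merged_index (Suc k)}"
  using parade_edge[of k] non_contracted_edge[of k] redirect_nth[of k] redirect_nth[of "Suc k"] assms
  by simp

lemma fs_edge:
  assumes "j < m - 1"
  shows "fs ! j \<in> g_edges (merge H u v) \<and> g_ends (merge H u v) (fs ! j) = {ws ! j, ws ! Suc j}"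
proof -
  have "keep j < m" "keep j \<noteq> s" using assms unfolding keep_def by auto
  moreover have "merged_index (keep j) = skip j"
    "merged_index (Suc (keep j)) = skip (Suc j)"
    using pos_uv unfolding keep_def skip_def merged_index_def by auto
  ultimately show ?thesis using merge_parade_edge[of "keep j"] fs_nth ws_nth assms by simp
qed

lemma walk_seq_ws: "walk_seq (merge H u v) ws fs"
  unfolding walk_seq_iff
proof (intro conjI allI impI)
  show "ws \<noteq> []" "length fs + 1 = length ws" using length_ws length_fs long by auto
  show "set ws \<subseteq> g_verts (merge H u v)"
  proof
    fix z assume "z \<in> set ws"
    then obtain j where "j < m" "z = vs ! skip j" using length_ws ws_nth by (auto simp: in_set_conv_nth)
    then show "z \<in> g_verts (merge H u v)"
      using v_nth parade_nth_eq_iff[of "skip j" pos_v] skip_le skip_ne pos_uv s_less parade_vert by auto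
  qed
qed (use fs_edge length_fs in auto)

lemma distinct_ws: "distinct ws"
proof -
  have "ws ! i \<noteq> ws ! j" if "i < m" "j < m" "i \<noteq> j" for i j
    using that ws_nth parade_nth_eq_iff[of "skip i" "skip j"] skip_le unfolding skip_def by auto
  then show ?thesis using length_ws by (auto simp: distinct_conv_nth)
qed

lemma px_uv: "px u = s" "px v = s" and py_uv: "py u = m - s - 1" "py v = m - s - 1"
  using uv_parade d0_nth[of s] d0_nth[of "Suc s"] dm_nth[of s] dm_nth[of "Suc s"] s_less dE_u dE_v
  unfolding px_def py_def by (auto simp: doubleton_eq_iff)

lemma edge_lipschitz_px: "edge_lipschitz (merge H u v) px"
proof (rule edge_lipschitz_merge[OF wf])
  show "edge_lipschitz H px" unfolding px_def[abs_def]
    by (intro edge_lipschitz_min edge_lipschitz_add edge_lipschitz_d0 edge_lipschitz_dE)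
qed (simp add: px_uv)

lemma edge_lipschitz_py: "edge_lipschitz (merge H u v) py"
proof (rule edge_lipschitz_merge[OF wf])
  show "edge_lipschitz H py" unfolding py_def[abs_def]
    by (intro edge_lipschitz_min edge_lipschitz_add edge_lipschitz_dm edge_lipschitz_dE)
qed (simp add: py_uv)

lemma px_start: "px (ws ! 0) = 0"
proof (cases "pos_v = 0")
  case True
  then have "ws ! 0 = u" "s = 0" using ws_nth[of 0] es_nonempty pos_uv u_nth unfolding skip_def by auto
  then show ?thesis using px_uv by simp
next
  case False
  then have "ws ! 0 = vs ! 0" using ws_nth[of 0] es_nonempty unfolding skip_def by simp
  then show ?thesis unfolding px_def using d0_nth[of 0] by simp
qed

lemma py_stop: "py (ws ! (m - 1)) = 0"
proof (cases "pos_v = m")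
  case True
  then have "s = m - 1" "pos_u = m - 1" using pos_uv s_less by auto
  then have "ws ! (m - 1) = u" using ws_nth[of "m - 1"] es_nonempty True u_nth unfolding skip_def by simp
  then show ?thesis using py_uv \<open>s = m - 1\<close> by simp
next
  case False
  then have "\<not> m - 1 < pos_v" "Suc (m - 1) = m" using pos_uv s_less by auto
  then have "ws ! (m - 1) = vs ! m" using ws_nth[of "m - 1"] es_nonempty unfolding skip_def by simp
  then show ?thesis unfolding py_def using dm_nth[of m] by simp
qed

lemma pinned_cases:
  assumes x: "px z \<le> j" and y: "py z + j \<le> m - 1"
  obtains (left) "d0 z \<le> j" "dm z + j \<le> m" "j \<le> s"
    | (right) "d0 z \<le> Suc j" "dm z + Suc j \<le> m" "s \<le> j"
    | (merged) "j = s" "dE z = 0"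
proof -
  have "d0 z \<le> j \<or> s + dE z \<le> j" using x unfolding px_def by (auto simp: min_le_iff_disj)
  moreover have "dm z + j \<le> m - 1 \<or> m - s - 1 + dE z + j \<le> m - 1"
    using y unfolding py_def by (auto simp: min_def split: if_splits)
  moreover have "m \<le> d0 z + dm z" by (rule d0_dm_ge)
  moreover have "dE z = gdist H z (vs ! s) \<or> dE z = gdist H z (vs ! Suc s)"
    "dE z \<le> gdist H z (vs ! s)" "dE z \<le> gdist H z (vs ! Suc s)"
    unfolding dE_parade by (auto simp: min_def)
  moreover have "d0 (vs ! Suc s) \<le> d0 z + gdist H z (vs ! Suc s)"
    "d0 z \<le> d0 (vs ! Suc s) + gdist H z (vs ! Suc s)"
    using d0_triangle gdist_sym by metis+
  moreover have "dm (vs ! s) \<le> gdist H z (vs ! s) + dm z" "dm z \<le> gdist H z (vs ! s) + dm (vs ! s)"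
    using dm_triangle gdist_sym by metis+
  moreover have "d0 (vs ! Suc s) = Suc s" "dm (vs ! s) = m - s" using d0_nth dm_nth s_less by auto
  ultimately show ?thesis using that s_less by linarith
qed

lemma pinned:
  assumes z: "z \<in> g_verts (merge H u v)" and x: "px z \<le> j" and y: "py z + j \<le> m - 1"
  shows "z = ws ! j"
proof -
  have j: "j < m" using y long by linarith
  have "z \<noteq> v" using z by simp
  from x y show ?thesis
  proof (cases rule: pinned_cases)
    case left
    from left(1,2) have "z = vs ! j" by (rule on_parade)
    then have "j \<noteq> pos_v" using \<open>z \<noteq> v\<close> v_nth by auto
    then have "j < pos_v" using \<open>j \<le> s\<close> pos_uv by auto
    then show ?thesis using \<open>z = vs ! j\<close> ws_nth j unfolding skip_def by simp
  next
    case right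
    then have "z = vs ! Suc j" by (intro on_parade) auto
    then have "Suc j \<noteq> pos_v" using \<open>z \<noteq> v\<close> v_nth by auto
    then have "\<not> j < pos_v" using \<open>s \<le> j\<close> pos_uv by auto
    then show ?thesis using \<open>z = vs ! Suc j\<close> ws_nth j unfolding skip_def by simp
  next
    case merged
    then have "z = u \<or> z = v"
      using dE_def gdist_eq_0 verts_nonempty finite_verts by (metis min_def)
    then have "z = vs ! pos_u" using \<open>z \<noteq> v\<close> u_nth by simp
    moreover have "skip s = pos_u" using pos_uv unfolding skip_def by auto
    ultimately show ?thesis using ws_nth j merged by simp
  qed
qed

lemma no_parallel:
  assumes j: "j < m - 1" and g: "g \<in> g_edges (merge H u v)" "g_ends (merge H u v) g = g_ends (merge H u v) (fs ! j)"
  shows "g = fs ! j"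
proof -
  have gE: "g \<in> g_edges H" "g_ends H g \<noteq> {u, v}" using g by auto
  have ends: "redirect u v ` g_ends H g = {ws ! j, ws ! Suc j}" using g fs_edge[OF j] by simp
  have "g_ends H g \<subseteq> set vs"
  proof
    fix w assume w: "w \<in> g_ends H g"
    have "ws ! j \<in> set ws" "ws ! Suc j \<in> set ws" using j length_ws by auto
    moreover have "redirect u v w \<in> {ws ! j, ws ! Suc j}" using ends w by blast
    ultimately have "w \<noteq> v \<Longrightarrow> w \<in> set ws" unfolding redirect_def by auto
    moreover have "v \<in> set vs" using v_nth pos_uv s_less length_parade by auto
    ultimately show "w \<in> set vs" using set_ws by blast
  qed
  then obtain c where c: "c < m" "g = es ! c" "g_ends H g = {vs ! c, vs ! Suc c}"
    using parade_edgeE[OF gE(1)] by blast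
  have "c \<noteq> s" using c gE(2) uv_parade by auto
  have k: "keep j < m" "keep j \<noteq> s" using j unfolding keep_def by auto
  have "{vs ! merged_index c, vs ! merged_index (Suc c)} =
      {vs ! merged_index (keep j), vs ! merged_index (Suc (keep j))}"
    using merge_parade_edge[OF c(1) \<open>c \<noteq> s\<close>] merge_parade_edge[OF k] g(2) c(2) fs_nth[OF j] by simp
  moreover have "merged_index c \<le> m" "merged_index (Suc c) \<le> m"
    "merged_index (keep j) \<le> m" "merged_index (Suc (keep j)) \<le> m"
    using c k pos_uv s_less unfolding merged_index_def by auto
  ultimately have "c = keep j"
    using parade_nth_eq_iff \<open>c \<noteq> s\<close> k(2) pos_uv unfolding merged_index_def
    by (auto simp: doubleton_eq_iff split: if_splits)
  then show ?thesis using c(2) fs_nth[OF j] by simp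
qed

lemma contract_parade: "m \<le> usp (merge H u v)"
proof -
  have "usp_certificate (merge H u v) ws fs (m - 1) px py"
    by unfold_locales (use walk_seq_ws distinct_ws length_fs edge_lipschitz_px edge_lipschitz_py
        px_start py_stop pinned no_parallel in auto)
  then have "unique_shortest_path (merge H u v) (ws, fs) (ws ! 0) (ws ! (m - 1))"
    by (rule usp_certificate.certified_unique_shortest_path)
  from length_le_usp[OF wf_merge_uv this] show ?thesis using length_ws by simp
qed

end

context parade_edge
begin

lemma d0_dm_uv: "d0 u \<le> d0 v + 1" "d0 v \<le> d0 u + 1" "dm u \<le> dm v + 1" "dm v \<le> dm u + 1"
proof -
  have "g_ends H e = {v, u}" using edge_ends by blast
  then show "d0 u \<le> d0 v + 1" "d0 v \<le> d0 u + 1" "dm u \<le> dm v + 1" "dm v \<le> dm u + 1"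
    using edge_lipschitzD[OF edge_lipschitz_d0 edge] edge_lipschitzD[OF edge_lipschitz_dm edge] edge_ends
    by blast+
qed

lemma contracted_parade_edge:
  assumes "u \<in> set vs" "v \<in> set vs"
  obtains s where "s < m" "{u, v} = {vs ! s, vs ! Suc s}"
proof -
  obtain i k where ik: "i \<le> m" "u = vs ! i" "k \<le> m" "v = vs ! k" using assms parade_index by blast
  moreover have "d0 u = i" "d0 v = k" "i \<noteq> k" using ik d0_nth edge_verts(1) by auto
  ultimately have "k = Suc i \<or> i = Suc k" using d0_dm_uv by linarith
  then show ?thesis
  proof
    assume "k = Suc i"
    then show thesis using that[of i] ik by simp
  next
    assume "i = Suc k"
    then show thesis using that[of k] ik by (simp add: insert_commute)
  qed
qed

lemma bypass_position:
  assumes "u \<notin> set vs \<or> v \<notin> set vs"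
  obtains s where "parade_bypass H vs es u v e s"
proof -
  have bypass: "parade_bypass H vs es u v e s"
    if "s \<le> m" "u \<in> set vs \<Longrightarrow> u = vs ! s" "v \<in> set vs \<Longrightarrow> v = vs ! s"
      "s \<le> d0 u" "s \<le> d0 v" "m - s \<le> dm u" "m - s \<le> dm v" for s
    by unfold_locales (use that in auto)
  note lip = d0_dm_uv
  consider (only_u) "u \<in> set vs" "v \<notin> set vs" | (only_v) "u \<notin> set vs" "v \<in> set vs"
    | (neither) "u \<notin> set vs" "v \<notin> set vs" using assms by blast
  then show ?thesis
  proof cases
    case only_u
    then obtain s where "s \<le> m" "u = vs ! s" using parade_index by blast
    then show ?thesis using that bypass[of s] only_u d0_nth dm_nth lip d0_dm_gt_off_parade[of v] by force
  next
    case only_v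
    then obtain s where "s \<le> m" "v = vs ! s" using parade_index by blast
    then show ?thesis using that bypass[of s] only_v d0_nth dm_nth lip d0_dm_gt_off_parade[of u] by force
  next
    case neither
    then have far: "m < d0 u + dm u" "m < d0 v + dm v" using d0_dm_gt_off_parade by auto
    then consider "d0 u + dm v \<le> m" | "d0 v + dm u \<le> m" | "m < d0 u + dm v" "m < d0 v + dm u"
      by linarith
    then show ?thesis
    proof cases
      case 1
      show ?thesis by (rule that, rule bypass[of "d0 u"]) (use 1 neither lip far in linarith)+
    next
      case 2
      show ?thesis by (rule that, rule bypass[of "d0 v"]) (use 2 neither lip far in linarith)+
    next
      case 3
      show ?thesis
        by (rule that, rule bypass[of "min (min (d0 u) (d0 v)) m"]) (use 3 neither lip far in auto)
    qed
  qed
qed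

lemma merge_keeps_parade: "\<exists>H'. wf_graph H' \<and> spanning_subgraph (merge H u v) H' \<and> m \<le> usp H'"
proof (cases "u \<in> set vs \<and> v \<in> set vs")
  case True
  then obtain s where "s < m" "{u, v} = {vs ! s, vs ! Suc s}" using contracted_parade_edge by blast
  then interpret parade_contract H vs es u v e s by unfold_locales
  show ?thesis using contract_parade wf_merge_uv subgraph_refl unfolding spanning_subgraph_def by blast
next
  case False
  then obtain s where "parade_bypass H vs es u v e s" using bypass_position by blast
  then interpret parade_bypass H vs es u v e s .
  show ?thesis using wf_H' spanning_H' bypass_parade by blast
qed

end

section \<open>Spanning supergraphs along minor operations\<close>

lemma usp_merge:
  assumes wf: "wf_graph H" and e: "e \<in> g_edges H" "g_ends H e = {u, v}"
  obtains H' where "wf_graph H'" "spanning_subgraph (merge H u v) H'" "usp H \<le> usp H' + 1"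
proof -
  obtain vs es where P: "unique_shortest_path H (vs, es) (hd vs) (last vs)" "length vs = usp H"
    using obtain_parade[OF wf] by blast
  then have len: "usp H = Suc (length es)"
    using walk_seq_length unfolding unique_shortest_path_def shortest_path_def is_path_iff_walk walk_def
    by auto
  show ?thesis
  proof (cases "2 \<le> length es")
    case True
    interpret parade_edge H vs es u v e using wf P(1) e True by unfold_locales
    show ?thesis using merge_keeps_parade that len by force
  next
    case False
    have "u \<noteq> v" "u \<in> g_verts H" using wf e unfolding wf_graph_def by (auto dest!: bspec[of _ _ e])
    then have "wf_graph (merge H u v)" using wf_merge[OF wf] by blast
    then show ?thesis using that[of "merge H u v"] usp_pos False len subgraph_refl
      unfolding spanning_subgraph_def by fastforce
  qed
qed

lemma delete_vertex_simps [simp]: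
  "g_verts (delete_vertex H v) = g_verts H - {v}"
  "g_edges (delete_vertex H v) = g_edges H"
  "g_ends (delete_vertex H v) = g_ends H"
  unfolding delete_vertex_def by simp_all

lemma delete_edge_simps [simp]:
  "g_verts (delete_edge H e) = g_verts H"
  "g_edges (delete_edge H e) = g_edges H - {e}"
  "g_ends (delete_edge H e) = g_ends H"
  unfolding delete_edge_def by simp_all

lemma contract_edge_simps:
  "g_verts (contract_edge H e) = g_verts H - {Max (g_ends H e)}"
  "g_edges (contract_edge H e) = g_edges H - {e}"
  "g_ends (contract_edge H e) f = redirect (Min (g_ends H e)) (Max (g_ends H e)) ` g_ends H f"
  unfolding contract_edge_def redirect_def[abs_def] Let_def by simp_all

lemma usp_delete_isolated:
  assumes wf: "wf_graph H" and v: "v \<in> g_verts H" "g_verts H - {v} \<noteq> {}"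
    and isolated: "\<forall>e\<in>g_edges H. v \<notin> g_ends H e"
  shows "wf_graph (delete_vertex H v)" "usp H \<le> usp (delete_vertex H v) + 1"
proof -
  show wf': "wf_graph (delete_vertex H v)" using wf v isolated unfolding wf_graph_def by auto
  obtain vs es where P: "unique_shortest_path H (vs, es) (hd vs) (last vs)" "length vs = usp H"
    using obtain_parade[OF wf] by blast
  then have W: "walk_seq H vs es"
    unfolding unique_shortest_path_def shortest_path_def is_path_iff_walk walk_def by auto
  show "usp H \<le> usp (delete_vertex H v) + 1"
  proof (cases "v \<in> set vs")
    case True
    have "es = []"
    proof (rule ccontr)
      assume "es \<noteq> []"
      obtain i where i: "i < length vs" "vs ! i = v" using True by (auto simp: in_set_conv_nth)
      have "0 < length es" "length vs = Suc (length es)" using \<open>es \<noteq> []\<close> walk_seq_length[OF W] by auto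
      then have "i < length es \<or> (i - 1 < length es \<and> Suc (i - 1) = i)" using i by arith
      then show False using W i isolated unfolding walk_seq_iff by (metis insertCI)
    qed
    then show ?thesis using P(2) walk_seq_length[OF W] by simp
  next
    case False
    have "is_path H Q a b" if "is_path (delete_vertex H v) Q a b" for Q a b
      using that unfolding is_path_def Let_def by auto
    moreover have "is_path (delete_vertex H v) (vs, es) (hd vs) (last vs)"
      using P(1) False unfolding unique_shortest_path_def shortest_path_def is_path_def Let_def by auto
    ultimately have "unique_shortest_path (delete_vertex H v) (vs, es) (hd vs) (last vs)"
      using P(1) unfolding unique_shortest_path_def shortest_path_def by blast
    then show ?thesis using length_le_usp[OF wf'] P(2) by fastforce
  qed
qed

lemma spanning_subgraph_trans:
  "spanning_subgraph G H \<Longrightarrow> spanning_subgraph H K \<Longrightarrow> spanning_subgraph G K"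
  unfolding spanning_subgraph_def subgraph_def by auto

lemma spanning_subgraph_merge:
  assumes span: "spanning_subgraph K K'" and V: "g_verts K1 = g_verts K - {v}"
    and E: "\<And>f. f \<in> g_edges K1 \<Longrightarrow>
      f \<in> g_edges K \<and> g_ends K f \<noteq> {u, v} \<and> g_ends K1 f = redirect u v ` g_ends K f"
  shows "spanning_subgraph K1 (merge K' u v)"
  unfolding spanning_subgraph_def subgraph_def
proof (intro conjI ballI subsetI)
  fix f assume "f \<in> g_edges K1"
  then have "f \<in> g_edges K'" "g_ends K' f = g_ends K f" "g_ends K f \<noteq> {u, v}"
    "g_ends K1 f = redirect u v ` g_ends K f"
    using E span unfolding spanning_subgraph_def subgraph_def by auto
  then show "f \<in> g_edges (merge K' u v)" "g_ends (merge K' u v) f = g_ends K1 f" by simp_all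
qed (use V span in \<open>auto simp: spanning_subgraph_def\<close>)

lemma sp_delete_vertex_le:
  assumes "wf_graph H" "wf_graph H'" "v \<in> g_verts H" "g_verts H' = g_verts H - {v}"
    and "usp H \<le> usp H' + 1"
  shows "sp H' \<le> sp H"
proof -
  have "finite (g_verts H)" using assms(1) unfolding wf_graph_def by simp
  then have "card (g_verts H') = card (g_verts H) - 1" "0 < card (g_verts H)"
    using assms(3,4) by (auto simp: card_gt_0_iff)
  then show ?thesis
    using assms(5) usp_pos[OF assms(1)] usp_le_card[OF assms(1)] unfolding sp_def by linarith
qed

lemma merge_spanning_supergraph:
  assumes wf: "wf_graph K'" and e: "e \<in> g_edges K'" "g_ends K' e = {w, v}"
    and span: "spanning_subgraph K1 (merge K' w v)"
  obtains K1' where "wf_graph K1'" "spanning_subgraph K1 K1'" "sp K1' \<le> sp K'"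
proof -
  obtain K1' where K1': "wf_graph K1'" "spanning_subgraph (merge K' w v) K1'" "usp K' \<le> usp K1' + 1"
    using usp_merge[OF wf e] by blast
  have "v \<in> g_verts K'" using wf e unfolding wf_graph_def by auto
  moreover have "g_verts K1' = g_verts K' - {v}" using K1'(2) unfolding spanning_subgraph_def by simp
  ultimately show ?thesis
    using that K1' spanning_subgraph_trans[OF span K1'(2)] sp_delete_vertex_le[OF wf K1'(1)] by blast
qed

lemma minor_step_spanning_supergraph:
  assumes step: "minor_step K K1" and wf: "wf_graph K'" and span: "spanning_subgraph K K'"
  obtains K1' where "wf_graph K1'" "spanning_subgraph K1 K1'" "sp K1' \<le> sp K'"
  using step
proof cases
  case (del_vertex v)
  then have v: "v \<in> g_verts K'" "g_verts K1 = g_verts K' - {v}"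
    using span unfolding spanning_subgraph_def by auto
  show ?thesis
  proof (cases "\<exists>e\<in>g_edges K'. v \<in> g_ends K' e")
    case True
    then obtain e where e: "e \<in> g_edges K'" "v \<in> g_ends K' e" by blast
    moreover have "card (g_ends K' e) = 2" using wf e(1) unfolding wf_graph_def by auto
    ultimately obtain w where "g_ends K' e = {w, v}" using card_2_other by metis
    moreover have "spanning_subgraph K1 (merge K' w v)"
      using span del_vertex by (intro spanning_subgraph_merge) (auto simp: redirect_def)
    ultimately show ?thesis using merge_spanning_supergraph[OF wf e(1)] that by blast
  next
    case False
    then have "wf_graph (delete_vertex K' v)" "usp K' \<le> usp (delete_vertex K' v) + 1"
      using usp_delete_isolated[OF wf v(1)] v(2) del_vertex by auto
    moreover have "spanning_subgraph K1 (delete_vertex K' v)"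
      using span del_vertex unfolding spanning_subgraph_def subgraph_def by auto
    ultimately show ?thesis using that sp_delete_vertex_le[OF wf _ v(1)] by simp
  qed
next
  case (del_edge e)
  then have "spanning_subgraph K1 K'" using span unfolding spanning_subgraph_def subgraph_def by auto
  then show ?thesis using that wf by blast
next
  case (contract e)
  define u where "u = Min (g_ends K e)"
  define v where "v = Max (g_ends K e)"
  have e: "e \<in> g_edges K'" "g_ends K' e = g_ends K e"
    using span contract unfolding spanning_subgraph_def subgraph_def by auto
  then have "card (g_ends K e) = 2" using wf unfolding wf_graph_def by auto
  then obtain x y where "g_ends K e = {x, y}" "x \<noteq> y" by (rule card_2_obtain)
  then have uv: "g_ends K e = {u, v}" unfolding u_def v_def by (auto simp: min_def max_def)
  have "g_ends K f \<noteq> {u, v}" if "f \<in> g_edges K" "f \<noteq> e" for f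
    using contract(3) that uv unfolding parallel_def by auto
  then have "spanning_subgraph K1 (merge K' u v)"
    using contract(1) contract_edge_simps[of K e] unfolding u_def v_def
    by (intro spanning_subgraph_merge[OF span]) auto
  then show ?thesis using merge_spanning_supergraph[OF wf e(1)] e(2) uv that by metis
qed

lemma minor_steps_spanning_supergraph:
  assumes "minor_step\<^sup>*\<^sup>* H K" "wf_graph H"
  shows "\<exists>K'. wf_graph K' \<and> spanning_subgraph K K' \<and> sp K' \<le> sp H"
  using assms(1)
proof (induction rule: rtranclp_induct)
  case base
  then show ?case using assms(2) subgraph_refl unfolding spanning_subgraph_def by blast
next
  case (step K K1)
  then obtain K' where K': "wf_graph K'" "spanning_subgraph K K'" "sp K' \<le> sp H" by blast
  obtain K1' where "wf_graph K1'" "spanning_subgraph K1 K1'" "sp K1' \<le> sp K'"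
    using minor_step_spanning_supergraph[OF step.hyps(2) K'(1,2)] .
  then show ?case using K'(3) by (intro exI[of _ K1']) auto
qed

section \<open>Isomorphic copies and the spectator floor\<close>

lemma is_path_map:
  assumes \<phi>: "bij_betw \<phi> (g_verts A) (g_verts B)" and \<eta>: "bij_betw \<eta> (g_edges A) (g_edges B)"
    and ends: "\<forall>e\<in>g_edges A. g_ends B (\<eta> e) = \<phi> ` g_ends A e"
    and P: "is_path A (vs, es) a b"
  shows "is_path B (map \<phi> vs, map \<eta> es) (\<phi> a) (\<phi> b)"
proof -
  have p: "vs \<noteq> []" "hd vs = a" "last vs = b" "distinct vs" "set vs \<subseteq> g_verts A" "length es + 1 = length vs"
    "\<And>i. i < length es \<Longrightarrow> es ! i \<in> g_edges A \<and> g_ends A (es ! i) = {vs ! i, vs ! Suc i}"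
    using P unfolding is_path_def Let_def by auto
  have "distinct (map \<phi> vs)"
    using p(4) inj_on_subset[OF bij_betw_imp_inj_on[OF \<phi>] p(5)] by (simp add: distinct_map)
  moreover have "set (map \<phi> vs) \<subseteq> g_verts B" using p(5) \<phi> bij_betw_imp_surj_on by fastforce
  moreover have "\<eta> (es ! i) \<in> g_edges B \<and> g_ends B (\<eta> (es ! i)) = {\<phi> (vs ! i), \<phi> (vs ! Suc i)}"
    if "i < length es" for i
    using p(7)[OF that] ends \<eta> bij_betw_imp_surj_on by fastforce
  ultimately show ?thesis using p unfolding is_path_def Let_def by (simp add: hd_map last_map)
qed

lemma graph_iso_inverse_ends:
  assumes wf: "wf_graph A"
    and \<phi>: "bij_betw \<phi> (g_verts A) (g_verts B)" and \<eta>: "bij_betw \<eta> (g_edges A) (g_edges B)"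
    and ends: "\<forall>e\<in>g_edges A. g_ends B (\<eta> e) = \<phi> ` g_ends A e"
  shows "\<forall>e\<in>g_edges B. g_ends A (inv_into (g_edges A) \<eta> e) = inv_into (g_verts A) \<phi> ` g_ends B e"
proof
  fix e assume "e \<in> g_edges B"
  then have e: "inv_into (g_edges A) \<eta> e \<in> g_edges A" "\<eta> (inv_into (g_edges A) \<eta> e) = e"
    using \<eta> by (auto simp: bij_betw_def inv_into_into f_inv_into_f)
  then have "g_ends A (inv_into (g_edges A) \<eta> e) \<subseteq> g_verts A" using wf unfolding wf_graph_def by auto
  then show "g_ends A (inv_into (g_edges A) \<eta> e) = inv_into (g_verts A) \<phi> ` g_ends B e"
    using ends e \<phi> by (metis bij_betw_imp_inj_on image_inv_into_cancel inv_into_image_cancel)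
qed

lemma unique_shortest_path_map:
  assumes wf: "wf_graph A"
    and \<phi>: "bij_betw \<phi> (g_verts A) (g_verts B)" and \<eta>: "bij_betw \<eta> (g_edges A) (g_edges B)"
    and ends: "\<forall>e\<in>g_edges A. g_ends B (\<eta> e) = \<phi> ` g_ends A e"
    and P: "unique_shortest_path A (vs, es) a b"
  shows "unique_shortest_path B (map \<phi> vs, map \<eta> es) (\<phi> a) (\<phi> b)"
proof -
  define \<phi>' where "\<phi>' = inv_into (g_verts A) \<phi>"
  define \<eta>' where "\<eta>' = inv_into (g_edges A) \<eta>"
  have path: "is_path A (vs, es) a b" using P unfolding unique_shortest_path_def shortest_path_def by blast
  then have ab: "a \<in> g_verts A" "b \<in> g_verts A" unfolding is_path_def Let_def by auto
  have pull_back: "is_path A (map \<phi>' qs, map \<eta>' gs) a b" if "is_path B (qs, gs) (\<phi> a) (\<phi> b)" for qs gs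
    using is_path_map[OF bij_betw_inv_into[OF \<phi>] bij_betw_inv_into[OF \<eta>]
        graph_iso_inverse_ends[OF wf \<phi> \<eta> ends] that] ab \<phi>
    unfolding \<phi>'_def \<eta>'_def by (simp add: bij_betw_imp_inj_on)
  have round_trip: "(map \<phi> (map \<phi>' qs), map \<eta> (map \<eta>' gs)) = (qs, gs)" if "is_path B (qs, gs) x y" for qs gs x y
  proof -
    have "set qs \<subseteq> g_verts B" "set gs \<subseteq> g_edges B"
      using that unfolding is_path_def Let_def by (auto simp: in_set_conv_nth)
    moreover have "map \<phi> (map \<phi>' qs) = qs" if "set qs \<subseteq> g_verts B"
      using that \<phi> unfolding \<phi>'_def bij_betw_def by (induction qs) (auto intro: f_inv_into_f)
    moreover have "map \<eta> (map \<eta>' gs) = gs" if "set gs \<subseteq> g_edges B"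
      using that \<eta> unfolding \<eta>'_def bij_betw_def by (induction gs) (auto intro: f_inv_into_f)
    ultimately show ?thesis by simp
  qed
  note P' = P[unfolded unique_shortest_path_def shortest_path_def]
  have shortest: "length vs \<le> length (fst Q)" if "is_path A Q a b" for Q
    using P'[THEN conjunct1, THEN conjunct2, rule_format, OF that] by simp
  have unique: "Q = (vs, es)" if "is_path A Q a b" "length (fst Q) = length vs" for Q
    by (rule P'[THEN conjunct2, rule_format]) (simp add: that)
  show ?thesis
    unfolding unique_shortest_path_def shortest_path_def
  proof (intro conjI allI impI is_path_map[OF \<phi> \<eta> ends path])
    fix Q assume "is_path B Q (\<phi> a) (\<phi> b)"
    then have "is_path B (fst Q, snd Q) (\<phi> a) (\<phi> b)" by simp
    from shortest[OF pull_back[OF this]]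
    show "length (fst (map \<phi> vs, map \<eta> es)) \<le> length (fst Q)" by simp
  next
    fix Q assume Q: "is_path B Q (\<phi> a) (\<phi> b) \<and> length (fst Q) = length (fst (map \<phi> vs, map \<eta> es))"
    then have p: "is_path B (fst Q, snd Q) (\<phi> a) (\<phi> b)" by simp
    from unique[OF pull_back[OF p]] Q have "(map \<phi>' (fst Q), map \<eta>' (snd Q)) = (vs, es)" by simp
    then have "(map \<phi> (map \<phi>' (fst Q)), map \<eta> (map \<eta>' (snd Q))) = (map \<phi> vs, map \<eta> es)" by simp
    then show "Q = (map \<phi> vs, map \<eta> es)" using round_trip[OF p] by simp
  qed
qed

lemma usp_graph_iso_le:
  assumes "wf_graph A" "wf_graph B" "graph_iso A B"
  shows "usp A \<le> usp B"
proof -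
  obtain \<phi> \<eta> where iso: "bij_betw \<phi> (g_verts A) (g_verts B)" "bij_betw \<eta> (g_edges A) (g_edges B)"
    "\<forall>e\<in>g_edges A. g_ends B (\<eta> e) = \<phi> ` g_ends A e"
    using assms(3) unfolding graph_iso_def by blast
  obtain vs es where P: "unique_shortest_path A (vs, es) (hd vs) (last vs)" "length vs = usp A"
    using obtain_parade[OF assms(1)] by blast
  from length_le_usp[OF assms(2) unique_shortest_path_map[OF assms(1) iso P(1)]] show ?thesis
    using P(2) by simp
qed

definition relabel :: "mgraph \<Rightarrow> (nat \<Rightarrow> nat) \<Rightarrow> (nat \<Rightarrow> nat) \<Rightarrow> mgraph" where
  "relabel K \<phi> \<eta> = \<lparr> g_verts = \<phi> ` g_verts K, g_edges = \<eta> ` g_edges K,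
      g_ends = (\<lambda>l. \<phi> ` g_ends K (inv_into (g_edges K) \<eta> l)) \<rparr>"

lemma relabel_simps [simp]:
  "g_verts (relabel K \<phi> \<eta>) = \<phi> ` g_verts K"
  "g_edges (relabel K \<phi> \<eta>) = \<eta> ` g_edges K"
  "inj_on \<eta> (g_edges K) \<Longrightarrow> e \<in> g_edges K \<Longrightarrow> g_ends (relabel K \<phi> \<eta>) (\<eta> e) = \<phi> ` g_ends K e"
  unfolding relabel_def by simp_all

lemma graph_iso_relabel:
  assumes "inj_on \<phi> (g_verts K)" "inj_on \<eta> (g_edges K)"
  shows "graph_iso K (relabel K \<phi> \<eta>)"
  unfolding graph_iso_def using assms by (intro exI[of _ \<phi>] exI[of _ \<eta>]) (simp add: inj_on_imp_bij_betw)

lemma wf_relabel: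
  assumes "wf_graph K" "inj_on \<phi> (g_verts K)" "inj_on \<eta> (g_edges K)"
  shows "wf_graph (relabel K \<phi> \<eta>)"
  unfolding wf_graph_def
proof (intro conjI ballI)
  fix l assume "l \<in> g_edges (relabel K \<phi> \<eta>)"
  then obtain e where e: "e \<in> g_edges K" "l = \<eta> e" by auto
  then have "g_ends K e \<subseteq> g_verts K" "card (g_ends K e) = 2" using assms(1) unfolding wf_graph_def by auto
  then show "g_ends (relabel K \<phi> \<eta>) l \<subseteq> g_verts (relabel K \<phi> \<eta>)" "card (g_ends (relabel K \<phi> \<eta>) l) = 2"
    using e assms(2,3) by (auto simp: card_image inj_on_subset)
qed (use assms(1) in \<open>auto simp: wf_graph_def\<close>)

definition pull_label :: "mgraph \<Rightarrow> (nat \<Rightarrow> nat) \<Rightarrow> nat \<Rightarrow> nat" where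
  "pull_label G g e = (if e \<in> g ` g_edges G then inv_into (g_edges G) g e else fresh_edge G + e)"

lemma pull_label_apply: "inj_on g (g_edges G) \<Longrightarrow> l \<in> g_edges G \<Longrightarrow> pull_label G g (g l) = l"
  unfolding pull_label_def by simp

lemma inj_pull_label:
  assumes fin: "finite (g_edges G)" and inj: "inj_on g (g_edges G)"
  shows "inj (pull_label G g)"
proof (rule injI)
  fix x y assume xy: "pull_label G g x = pull_label G g y"
  have side: "pull_label G g e \<in> g_edges G \<longleftrightarrow> e \<in> g ` g_edges G" for e
    using less_fresh_edge[OF fin] pull_label_apply[OF inj] unfolding pull_label_def by force
  then have same_side: "x \<in> g ` g_edges G \<longleftrightarrow> y \<in> g ` g_edges G" using xy by metis
  show "x = y"
  proof (cases "x \<in> g ` g_edges G")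
    case True
    then have eq: "inv_into (g_edges G) g x = inv_into (g_edges G) g y" and y: "y \<in> g ` g_edges G"
      using xy same_side unfolding pull_label_def by simp_all
    show ?thesis using inv_into_injective[OF eq True y] .
  next
    case False
    then show ?thesis using xy same_side unfolding pull_label_def by simp
  qed
qed

lemma graph_iso_spanning_supergraph:
  assumes wfG: "wf_graph G" and wfK: "wf_graph K" and iso: "graph_iso G H"
    and span: "spanning_subgraph H K"
  obtains G' where "wf_graph G'" "spanning_subgraph G G'" "graph_iso K G'"
proof -
  obtain f g where f: "bij_betw f (g_verts G) (g_verts H)" and g: "bij_betw g (g_edges G) (g_edges H)"
    and ends: "\<forall>e\<in>g_edges G. g_ends H (g e) = f ` g_ends G e"
    using iso unfolding graph_iso_def by blast
  define \<phi> where "\<phi> = inv_into (g_verts G) f"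
  define \<eta> where "\<eta> = pull_label G g"
  define G' where "G' = relabel K \<phi> \<eta>"
  have inj_g: "inj_on g (g_edges G)" using g by (rule bij_betw_imp_inj_on)
  note \<eta>_g = pull_label_apply[OF inj_g, folded \<eta>_def]
  have "finite (g_edges G)" using wfG unfolding wf_graph_def by simp
  then have inj_\<eta>: "inj_on \<eta> (g_edges K)"
    using inj_pull_label[OF _ inj_g] inj_on_subset[OF _ subset_UNIV] unfolding \<eta>_def by blast
  have V: "g_verts K = g_verts H" "g_verts H = f ` g_verts G"
    using span f unfolding spanning_subgraph_def bij_betw_def by auto
  have inj_\<phi>: "inj_on \<phi> (g_verts K)" unfolding \<phi>_def V by (rule inj_on_inv_into) simp
  have VG': "g_verts G' = g_verts G"
    using V inv_into_image_cancel[OF bij_betw_imp_inj_on[OF f] subset_refl]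
    unfolding G'_def \<phi>_def by simp
  have "subgraph G G'"
    unfolding subgraph_def
  proof (intro conjI ballI subsetI)
    show "x \<in> g_verts G'" if "x \<in> g_verts G" for x using that VG' by simp
    fix l assume l: "l \<in> g_edges G"
    then have "g l \<in> g_edges H" using g unfolding bij_betw_def by auto
    then have gl: "g l \<in> g_edges K" "g_ends K (g l) = f ` g_ends G l"
      using span ends l unfolding spanning_subgraph_def subgraph_def by auto
    show "l \<in> g_edges G'" unfolding G'_def relabel_simps
      using image_eqI[of l \<eta> "g l", OF \<eta>_g[OF l, symmetric] gl(1)] .
    have "g_ends G l \<subseteq> g_verts G" using wfG l unfolding wf_graph_def by auto
    have "g_ends G' l = \<phi> ` g_ends K (g l)"
      using relabel_simps(3)[OF inj_\<eta> gl(1), of \<phi>] \<eta>_g[OF l] unfolding G'_def by simp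
    also have "\<dots> = g_ends G l"
      using gl(2) inv_into_image_cancel[OF bij_betw_imp_inj_on[OF f] \<open>g_ends G l \<subseteq> g_verts G\<close>]
      unfolding \<phi>_def by simp
    finally show "g_ends G' l = g_ends G l" .
  qed
  then have "spanning_subgraph G G'" unfolding spanning_subgraph_def using VG' by simp
  moreover have "wf_graph G'" unfolding G'_def by (rule wf_relabel[OF wfK inj_\<phi> inj_\<eta>])
  moreover have "graph_iso K G'" unfolding G'_def by (rule graph_iso_relabel[OF inj_\<phi> inj_\<eta>])
  ultimately show ?thesis using that by blast
qed

lemma minor_steps_delete_edges:
  assumes "finite S" "S \<subseteq> g_edges H"
  shows "minor_step\<^sup>*\<^sup>* H (H\<lparr>g_edges := g_edges H - S\<rparr>)"
  using assms
proof (induction S rule: finite_induct)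
  case (insert x S)
  then have IH: "minor_step\<^sup>*\<^sup>* H (H\<lparr>g_edges := g_edges H - S\<rparr>)"
    and x: "x \<in> g_edges (H\<lparr>g_edges := g_edges H - S\<rparr>)" by simp_all
  have "g_edges H - S - {x} = g_edges H - insert x S" by blast
  then have "delete_edge (H\<lparr>g_edges := g_edges H - S\<rparr>) x = H\<lparr>g_edges := g_edges H - insert x S\<rparr>"
    unfolding delete_edge_def by simp
  with IH minor_step.del_edge[OF x] show ?case by (metis rtranclp.rtrancl_into_rtrancl)
qed simp

lemma is_minor_spanning_subgraph:
  assumes "wf_graph G'" "spanning_subgraph G G'"
  shows "is_minor G G'"
proof -
  define G'' where "G'' = G'\<lparr>g_edges := g_edges G' - (g_edges G' - g_edges G)\<rparr>"
  have "finite (g_edges G')" "g_edges G \<subseteq> g_edges G'"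
    using assms unfolding wf_graph_def spanning_subgraph_def subgraph_def by auto
  then have "minor_step\<^sup>*\<^sup>* G' G''" and "g_edges G'' = g_edges G"
    unfolding G''_def using minor_steps_delete_edges[of "g_edges G' - g_edges G" G'] by auto
  moreover have "graph_iso G G''"
    unfolding graph_iso_def
  proof (intro exI[of _ id] conjI)
    show "bij_betw id (g_verts G) (g_verts G'')" "bij_betw id (g_edges G) (g_edges G'')"
      using assms(2) \<open>g_edges G'' = g_edges G\<close> unfolding G''_def spanning_subgraph_def by simp_all
    show "\<forall>e\<in>g_edges G. g_ends G'' (id e) = id ` g_ends G e"
      using assms(2) unfolding G''_def spanning_subgraph_def subgraph_def by simp
  qed
  ultimately show ?thesis unfolding is_minor_def by blast
qed

lemma sp_floor_le: "wf_graph H \<Longrightarrow> is_minor G H \<Longrightarrow> sp_floor G \<le> sp H"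
  unfolding sp_floor_def by (rule cInf_lower) auto

lemma sp_floor_attained:
  assumes "wf_graph G"
  obtains H where "wf_graph H" "is_minor G H" "sp H = sp_floor G"
proof -
  have "is_minor G G" using is_minor_spanning_subgraph[OF assms] subgraph_refl
    unfolding spanning_subgraph_def by blast
  then have "{sp H | H. wf_graph H \<and> is_minor G H} \<noteq> {}" using assms by blast
  then have "sp_floor G \<in> {sp H | H. wf_graph H \<and> is_minor G H}"
    unfolding sp_floor_def by (rule Inf_nat_def1)
  then show ?thesis using that by auto
qed

theorem theorem2p9:
  assumes "wf_graph G"
  shows "\<exists>G'. wf_graph G' \<and> card (g_verts G') = card (g_verts G) \<and>
              subgraph G G' \<and> sp_floor G = sp G'"
proof -
  obtain H where H: "wf_graph H" "is_minor G H" "sp H = sp_floor G"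
    using sp_floor_attained[OF assms] .
  then obtain H' where "minor_step\<^sup>*\<^sup>* H H'" "graph_iso G H'"
    unfolding is_minor_def by blast
  moreover obtain K where K: "wf_graph K" "spanning_subgraph H' K" "sp K \<le> sp H"
    using minor_steps_spanning_supergraph[OF \<open>minor_step\<^sup>*\<^sup>* H H'\<close> H(1)] by blast
  ultimately obtain G' where G': "wf_graph G'" "spanning_subgraph G G'" "graph_iso K G'"
    using graph_iso_spanning_supergraph[OF assms K(1)] by blast
  have "card (g_verts G') = card (g_verts K)"
    using G'(3) unfolding graph_iso_def by (metis bij_betw_same_card)
  then have "sp G' \<le> sp K" using usp_graph_iso_le[OF K(1) G'(1,3)] unfolding sp_def by simp
  moreover have "sp_floor G \<le> sp G'" using sp_floor_le[OF G'(1) is_minor_spanning_subgraph[OF G'(1,2)]] .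
  ultimately show ?thesis using G' K(3) H(3) unfolding spanning_subgraph_def by auto
qed

end
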